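(* Let $F$ be a $4$-regular graph, let $D$ be a directed version of $F$, let $\mathbf o$ be a transitional orientation of $F$, let $P$ be a circuit partition of $F$, let $E\subseteq E(F)$ be such that each circuit of $P$ traverses at most one edge of $E$, and let $\Gamma$ be a cycle spanning set of $F-E$. Then the matrix $\mathrm{CM}(F,\Gamma,D)\cdot\Delta_{D,\mathbf o}|_{\tau(P)}$ (with columns indexed by $\tau(P)=E(\mathrm{Tch}(P))$) represents the cographic matroid $M^*(\mathrm{Tch}(P))$.
   Context: Graphs: $G=(V,H,E,\epsilon)$ with finite sets of vertices $V$ and half-edges $H$, a partition $E$ of $H$ into unordered pairs (edges), and $\epsilon:H\to V$; loops and multiple edges allowed. $G-E'$ deletes the edges of $E'$. A directed version orders each edge as (tail, head). A single transition is an unordered pair of distinct half-edges incident with a common vertex; a directed single transition is such an ordered pair. A closed walk is a sequence $((h_1,h_2),\dots,(h_{n-1},h_n))$ of directed single transitions with $\{h_2,h_3\},\{h_4,h_5\},\dots,\{h_n,h_1\}$ edges, up to cyclic shift. For a directed version $D$ and closed walk $W$, $\sigma(D,W)\in\mathbb Z^{E}$ counts, at each edge $e$, traversals along its direction minus traversals against it. A circuit is a nonempty closed walk using each half-edge at most once, with orientation forgotten. The cycle space of $D$ is the right null space over $\mathbb Q$ of its vertex-edge incidence matrix. A cycle basis of $G$ is a set $B$ of closed walks such that the vectors $\sigma(D,W)$, $W\in B$, are pairwise distinct and form a basis of the cycle space; a cycle spanning set is a set of closed walks containing a cycle basis. For a set $\Gamma$ of closed walks, $\mathrm{CM}(G,\Gamma,D)$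 is the $\Gamma\times E(G)$ matrix with row $\sigma(D,W)$ for $W\in\Gamma$. $M^*(G)$ is the dual of the cycle matroid of $G$ on $E(G)$; a matrix represents it if its column matroid equals it. $F$ is $4$-regular if every vertex is incident with exactly $4$ half-edges. A transition at $v$ is a partition of the four half-edges at $v$ into two single transitions; $\mathfrak T(F)$ is the set of transitions. A circuit partition $P$ is a set of circuits of $F$ such that every half-edge lies in exactly one single transition of exactly one circuit of $P$; $\tau(P)$ is the set of transitions both of whose single transitions occur in circuits of $P$. The touch-graph $\mathrm{Tch}(P)$ has vertex set $P$, half-edge set the set of single transitions occurring in circuits of $P$, edge set $\tau(P)$, and maps each single transition to the circuit containing it. A transitional orientation $\mathbf o$ assigns to each transition $t$ one of its two single transitions $\mathbf o(t)$. The edge-transition incidence matrix $\Delta_{D,\mathbf o}$ is the $E(F)\times\mathfrak T(F)$ matrix over $\mathbb Q$ whose $(e,t)$ entry is $1$ if $e\cap\mathbf o(t)=\{h\}$ with $h$ the tail of $e$ in $D$, $-1$ if $e\cap\mathbf o(t)=\{h\}$ with $h$ the head of $e$, and $0$ otherwise; $A|_Y$ is the restriction to columns in $Y$. *)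

theory Defs
  imports Complex_Main
begin

record ('v,'h) hgraph =
  verts :: "'v set"
  halfs :: "'h set"
  edges :: "'h set set"
  inc   :: "'h \<Rightarrow> 'v"

definition is_graph :: "('v,'h) hgraph \<Rightarrow> bool" where
  "is_graph G \<longleftrightarrow> finite (verts G) \<and> finite (halfs G) \<and>
     (\<forall>e\<in>edges G. \<exists>a b. a \<noteq> b \<and> e = {a, b}) \<and>
     \<Union>(edges G) = halfs G \<and>
     (\<forall>e\<in>edges G. \<forall>e'\<in>edges G. e \<noteq> e' \<longrightarrow> e \<inter> e' = {}) \<and>
     inc G ` halfs G \<subseteq> verts G"

definition del_edges :: "('v,'h) hgraph \<Rightarrow> 'h set set \<Rightarrow> ('v,'h) hgraph" where
  "del_edges G X = G\<lparr>halfs := halfs G - \<Union>X, edges := edges G - X\<rparr>"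

definition directed_version :: "('v,'h) hgraph \<Rightarrow> ('h set \<Rightarrow> 'h) \<Rightarrow> bool" where
  "directed_version G tail \<longleftrightarrow> (\<forall>e\<in>edges G. tail e \<in> e)"

definition head :: "('h set \<Rightarrow> 'h) \<Rightarrow> 'h set \<Rightarrow> 'h" where
  "head tail e = (THE h. h \<in> e \<and> h \<noteq> tail e)"

definition dir_single_trans :: "('v,'h) hgraph \<Rightarrow> 'h \<times> 'h \<Rightarrow> bool" where
  "dir_single_trans G p \<longleftrightarrow> fst p \<in> halfs G \<and> snd p \<in> halfs G \<and> fst p \<noteq> snd p \<and>
     inc G (fst p) = inc G (snd p)"

definition single_trans :: "('v,'h) hgraph \<Rightarrow> 'h set \<Rightarrow> bool" where
  "single_trans G s \<longleftrightarrow> (\<exists>a b. s = {a, b} \<and> dir_single_trans G (a, b))"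

text \<open>A closed walk ((h1,h2),...,(h_{n-1},h_n)) is represented by a list of directed single
  transitions, consecutive ones (cyclically) joined by edges {h_2,h_3},...,{h_n,h_1}.\<close>
definition closed_walk :: "('v,'h) hgraph \<Rightarrow> ('h \<times> 'h) list \<Rightarrow> bool" where
  "closed_walk G w \<longleftrightarrow> (\<forall>p\<in>set w. dir_single_trans G p) \<and>
     (\<forall>i<length w. {snd (w ! i), fst (w ! (Suc i mod length w))} \<in> edges G)"

definition walk_edges :: "('h \<times> 'h) list \<Rightarrow> 'h set set" where
  "walk_edges w = {{snd (w ! i), fst (w ! (Suc i mod length w))} | i. i < length w}"

definition walk_halfs :: "('h \<times> 'h) list \<Rightarrow> 'h list" where
  "walk_halfs w = concat (map (\<lambda>(a, b). [a, b]) w)"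

definition trans_set :: "('h \<times> 'h) list \<Rightarrow> 'h set set" where
  "trans_set w = (\<lambda>(a, b). {a, b}) ` set w"

definition sigma :: "('h set \<Rightarrow> 'h) \<Rightarrow> ('h \<times> 'h) list \<Rightarrow> 'h set \<Rightarrow> int" where
  "sigma tail w e = (\<Sum>i<length w.
     if {snd (w ! i), fst (w ! (Suc i mod length w))} = e
     then (if snd (w ! i) = tail e then 1 else -1) else 0)"

definition sigma_vec :: "('h set \<Rightarrow> 'h) \<Rightarrow> ('h \<times> 'h) list \<Rightarrow> 'h set \<Rightarrow> rat" where
  "sigma_vec tail w = (\<lambda>e. of_int (sigma tail w e))"

definition circuit_walk :: "('v,'h) hgraph \<Rightarrow> ('h \<times> 'h) list \<Rightarrow> bool" where
  "circuit_walk G w \<longleftrightarrow> closed_walk G w \<and> w \<noteq> [] \<and> distinct (walk_halfs w)"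

text \<open>A circuit (orientation and cyclic shift forgotten) is identified with the set of
  single transitions it uses.\<close>
definition circuit :: "('v,'h) hgraph \<Rightarrow> 'h set set \<Rightarrow> bool" where
  "circuit G C \<longleftrightarrow> (\<exists>w. circuit_walk G w \<and> trans_set w = C)"

definition incidence :: "('v,'h) hgraph \<Rightarrow> ('h set \<Rightarrow> 'h) \<Rightarrow> 'v \<Rightarrow> 'h set \<Rightarrow> rat" where
  "incidence G tail v e = (if inc G (tail e) = v then 1 else 0) - (if inc G (head tail e) = v then 1 else 0)"

definition cycle_space :: "('v,'h) hgraph \<Rightarrow> ('h set \<Rightarrow> 'h) \<Rightarrow> ('h set \<Rightarrow> rat) set" where
  "cycle_space G tail = {x. (\<forall>e. e \<notin> edges G \<longrightarrow> x e = 0) \<and>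
      (\<forall>v\<in>verts G. (\<Sum>e\<in>edges G. incidence G tail v e * x e) = 0)}"

definition lin_indep :: "('e \<Rightarrow> rat) set \<Rightarrow> bool" where
  "lin_indep S \<longleftrightarrow> (\<forall>T c. finite T \<and> T \<subseteq> S \<and> (\<lambda>e. \<Sum>x\<in>T. c x * x e) = (\<lambda>e. 0)
       \<longrightarrow> (\<forall>x\<in>T. c x = 0))"

definition lin_span :: "('e \<Rightarrow> rat) set \<Rightarrow> ('e \<Rightarrow> rat) set" where
  "lin_span S = {y. \<exists>T c. finite T \<and> T \<subseteq> S \<and> y = (\<lambda>e. \<Sum>x\<in>T. c x * x e)}"

definition cycle_basis :: "('v,'h) hgraph \<Rightarrow> ('h set \<Rightarrow> 'h) \<Rightarrow> ('h \<times> 'h) list set \<Rightarrow> bool" where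
  "cycle_basis G tail B \<longleftrightarrow> (\<forall>w\<in>B. closed_walk G w) \<and> inj_on (sigma_vec tail) B \<and>
     lin_indep (sigma_vec tail ` B) \<and> lin_span (sigma_vec tail ` B) = cycle_space G tail"

definition cycle_spanning_set :: "('v,'h) hgraph \<Rightarrow> ('h set \<Rightarrow> 'h) \<Rightarrow> ('h \<times> 'h) list set \<Rightarrow> bool" where
  "cycle_spanning_set G tail \<Gamma> \<longleftrightarrow> (\<forall>w\<in>\<Gamma>. closed_walk G w) \<and> (\<exists>B\<subseteq>\<Gamma>. cycle_basis G tail B)"

definition CM :: "('h set \<Rightarrow> 'h) \<Rightarrow> ('h \<times> 'h) list \<Rightarrow> 'h set \<Rightarrow> rat" where
  "CM tail W e = sigma_vec tail W e"

definition four_regular :: "('v,'h) hgraph \<Rightarrow> bool" where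
  "four_regular G \<longleftrightarrow> (\<forall>v\<in>verts G. card {h\<in>halfs G. inc G h = v} = 4)"

definition transitions :: "('v,'h) hgraph \<Rightarrow> 'h set set set" where
  "transitions G = {{s1, s2} | s1 s2 v. v \<in> verts G \<and> single_trans G s1 \<and> single_trans G s2 \<and>
      s1 \<inter> s2 = {} \<and> s1 \<union> s2 = {h\<in>halfs G. inc G h = v}}"

definition transitional_orientation :: "('v,'h) hgraph \<Rightarrow> ('h set set \<Rightarrow> 'h set) \<Rightarrow> bool" where
  "transitional_orientation G ori \<longleftrightarrow> (\<forall>t\<in>transitions G. ori t \<in> t)"

definition circuit_partition :: "('v,'h) hgraph \<Rightarrow> 'h set set set \<Rightarrow> bool" where
  "circuit_partition G P \<longleftrightarrow> (\<forall>C\<in>P. circuit G C) \<and>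
     (\<forall>h\<in>halfs G. \<exists>!p. fst p \<in> P \<and> snd p \<in> fst p \<and> h \<in> snd p)"

definition tau :: "('v,'h) hgraph \<Rightarrow> 'h set set set \<Rightarrow> 'h set set set" where
  "tau G P = {t \<in> transitions G. t \<subseteq> \<Union>P}"

definition touch_graph :: "('v,'h) hgraph \<Rightarrow> 'h set set set \<Rightarrow> ('h set set, 'h set) hgraph" where
  "touch_graph G P = \<lparr>verts = P, halfs = \<Union>P, edges = tau G P,
      inc = (\<lambda>s. THE C. C \<in> P \<and> s \<in> C)\<rparr>"

definition Delta :: "('h set \<Rightarrow> 'h) \<Rightarrow> ('h set set \<Rightarrow> 'h set) \<Rightarrow> 'h set \<Rightarrow> 'h set set \<Rightarrow> rat" where
  "Delta tail ori e t = (if \<exists>h. e \<inter> ori t = {h}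
      then (if e \<inter> ori t = {tail e} then 1 else if e \<inter> ori t = {head tail e} then -1 else 0) else 0)"

text \<open>Forests = independent sets of the cycle matroid: edge sets containing no circuit.\<close>
definition forest :: "('v,'h) hgraph \<Rightarrow> 'h set set \<Rightarrow> bool" where
  "forest G X \<longleftrightarrow> X \<subseteq> edges G \<and> \<not> (\<exists>w. circuit_walk G w \<and> walk_edges w \<subseteq> X)"

definition cm_basis :: "('v,'h) hgraph \<Rightarrow> 'h set set \<Rightarrow> bool" where
  "cm_basis G B \<longleftrightarrow> forest G B \<and> (\<forall>Y. forest G Y \<and> B \<subseteq> Y \<longrightarrow> Y = B)"

text \<open>Independent sets of the dual M*(G) of the cycle matroid: subsets of complements of bases.\<close>
definition cocycle_indep :: "('v,'h) hgraph \<Rightarrow> 'h set set \<Rightarrow> bool" where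
  "cocycle_indep G X \<longleftrightarrow> X \<subseteq> edges G \<and> (\<exists>B. cm_basis G B \<and> X \<inter> B = {})"

definition col_indep :: "'r set \<Rightarrow> 'c set \<Rightarrow> ('r \<Rightarrow> 'c \<Rightarrow> rat) \<Rightarrow> 'c set \<Rightarrow> bool" where
  "col_indep R C M X \<longleftrightarrow> X \<subseteq> C \<and> finite X \<and>
     (\<forall>a. (\<forall>r\<in>R. (\<Sum>c\<in>X. a c * M r c) = 0) \<longrightarrow> (\<forall>c\<in>X. a c = 0))"

definition represents_cographic :: "'r set \<Rightarrow> ('r \<Rightarrow> 'c set \<Rightarrow> rat) \<Rightarrow> ('u,'c) hgraph \<Rightarrow> bool" where
  "represents_cographic R M G \<longleftrightarrow> (\<forall>X. col_indep R (edges G) M X \<longleftrightarrow> cocycle_indep G X)"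

end

theory Submission
  imports Defs "HOL-Library.Transitive_Closure_Table"
begin

(* A closed walk of F - E defines on the half-edges of F the function "exits minus entries",
   which is antisymmetric on every edge and conserved at every vertex: a circulation. Summing a
   function over single transitions swaps these two conditions, because a transition partitions
   the half-edges at a vertex and the half-edges of a circuit of P form a union of edges. Hence
   every row of CM * Delta is a circulation on Tch(P), read off at the single transition o(t) of
   each edge t. A circulation has zero net flow across every cut, so if the columns X are
   independent, the ends of each t in X stay connected in Tch(P) - X, and a maximal forest of
   Tch(P) - X is a basis of the cycle matroid avoiding X. Conversely, if X avoids a basis B, the
   fundamental circuit of t in X lifts to a circulation of F - E, routing each passage through a
   circuit of P along the one of its two arcs that avoids E; it lies in the span of the rows, and
   pairing it with a dependency among the columns X isolates the coefficient of t. *)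


section \<open>Graphs with half-edges\<close>


lemma is_graph_edgeE:
  assumes "is_graph G" "e \<in> edges G"
  obtains a b where "a \<noteq> b" "e = {a, b}"
  using assms unfolding is_graph_def by auto

lemma is_graph_edges_disjoint:
  "is_graph G \<Longrightarrow> e \<in> edges G \<Longrightarrow> e' \<in> edges G \<Longrightarrow> h \<in> e \<Longrightarrow> h \<in> e' \<Longrightarrow> e = e'"
  unfolding is_graph_def by (elim conjE) blast

lemma is_graph_Union_edges: "is_graph G \<Longrightarrow> \<Union>(edges G) = halfs G"
  unfolding is_graph_def by simp

lemma is_graph_finite_halfs: "is_graph G \<Longrightarrow> finite (halfs G)"
  unfolding is_graph_def by simp

lemma is_graph_finite_verts: "is_graph G \<Longrightarrow> finite (verts G)"
  unfolding is_graph_def by simp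

lemma is_graph_inc: "is_graph G \<Longrightarrow> h \<in> halfs G \<Longrightarrow> inc G h \<in> verts G"
  unfolding is_graph_def by auto

lemma is_graph_finite_edges: "is_graph G \<Longrightarrow> finite (edges G)"
proof -
  assume G: "is_graph G"
  have "edges G \<subseteq> Pow (halfs G)" using is_graph_Union_edges[OF G] by blast
  then show ?thesis using is_graph_finite_halfs[OF G] by (simp add: finite_subset)
qed

lemma is_graph_finite_edge: "is_graph G \<Longrightarrow> e \<in> edges G \<Longrightarrow> finite e"
  by (metis finite.emptyI finite_insert is_graph_edgeE)

lemma is_graph_edge_neq: "is_graph G \<Longrightarrow> {a, b} \<in> edges G \<Longrightarrow> a \<noteq> b"
  by (metis doubleton_eq_iff is_graph_edgeE)

lemma edge_eq_tail_head:
  assumes G: "is_graph G" and D: "directed_version G tail" and e: "e \<in> edges G"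
  shows "tail e \<noteq> head tail e" "e = {tail e, head tail e}"
proof -
  obtain a b where ab: "a \<noteq> b" "e = {a, b}" using is_graph_edgeE[OF G e] .
  have "tail e \<in> e" using D e unfolding directed_version_def by blast
  then have "\<exists>!h. h \<in> e \<and> h \<noteq> tail e" using ab by auto
  then have "head tail e \<in> e \<and> head tail e \<noteq> tail e"
    unfolding head_def by (rule theI')
  with ab \<open>tail e \<in> e\<close> show "tail e \<noteq> head tail e" "e = {tail e, head tail e}" by auto
qed

lemma sum_Union_edges:
  assumes "is_graph G" "A \<subseteq> edges G"
  shows "sum f (\<Union>A) = (\<Sum>e\<in>A. sum f e)"
  using sum.Union_disjoint[of A f] assms is_graph_finite_edge[OF assms(1)]
    is_graph_edges_disjoint[OF assms(1)] by (simp add: o_def subset_iff) blast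

lemma sum_halfs_by_edges: "is_graph G \<Longrightarrow> (\<Sum>e\<in>edges G. sum f e) = sum f (halfs G)"
  using sum_Union_edges[of G "edges G" f] is_graph_Union_edges[of G] by simp

lemma is_graph_del_edges:
  assumes G: "is_graph G" and X: "X \<subseteq> edges G"
  shows "is_graph (del_edges G X)"
proof -
  have "\<Union>(edges G - X) = halfs G - \<Union>X"
    using is_graph_Union_edges[OF G] is_graph_edges_disjoint[OF G] X by blast
  then show ?thesis using G unfolding is_graph_def del_edges_def by auto
qed

lemma closed_walk_del_edges: "closed_walk (del_edges G X) w \<Longrightarrow> closed_walk G w"
  unfolding closed_walk_def dir_single_trans_def del_edges_def by auto

section \<open>Circulations on half-edges\<close>

definition halfs_at :: "('v,'h) hgraph \<Rightarrow> 'v \<Rightarrow> 'h set" where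
  "halfs_at G v = {h\<in>halfs G. inc G h = v}"

definition antisymmetric :: "('v,'h) hgraph \<Rightarrow> ('h \<Rightarrow> 'a::comm_monoid_add) \<Rightarrow> bool" where
  "antisymmetric G g \<longleftrightarrow> (\<forall>e\<in>edges G. sum g e = 0)"

definition conserved :: "('v,'h) hgraph \<Rightarrow> ('h \<Rightarrow> 'a::comm_monoid_add) \<Rightarrow> bool" where
  "conserved G g \<longleftrightarrow> (\<forall>v\<in>verts G. sum g (halfs_at G v) = 0)"

lemma sum_edge_tail_head:
  assumes "is_graph G" "directed_version G tail" "e \<in> edges G"
  shows "sum f e = f (tail e) + f (head tail e)"
proof -
  define a b where "a = tail e" and "b = head tail e"
  have "a \<noteq> b" "e = {a, b}" using edge_eq_tail_head[OF assms] unfolding a_def b_def by auto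
  then show ?thesis unfolding a_def[symmetric] b_def[symmetric] by simp
qed

lemma antisymmetric_head:
  fixes g :: "'h \<Rightarrow> 'a::ab_group_add"
  assumes "is_graph G" "directed_version G tail" "antisymmetric G g" "e \<in> edges G"
  shows "g (head tail e) = - g (tail e)"
  using assms sum_edge_tail_head[OF assms(1,2,4), of g] unfolding antisymmetric_def
  by (simp add: eq_neg_iff_add_eq_0 add.commute)

lemma antisymmetric_uminus: "antisymmetric G (\<lambda>h. - g h) \<longleftrightarrow> antisymmetric G (g :: 'h \<Rightarrow> 'a::ab_group_add)"
  unfolding antisymmetric_def by (simp add: sum_negf)

lemma antisymmetric_cong:
  assumes "is_graph G" "\<And>h. h \<in> halfs G \<Longrightarrow> g h = g' h"
  shows "antisymmetric G g \<longleftrightarrow> antisymmetric G g'"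
proof -
  have "sum g e = sum g' e" if "e \<in> edges G" for e
    using assms(2) is_graph_Union_edges[OF assms(1)] that by (intro sum.cong) auto
  then show ?thesis unfolding antisymmetric_def by simp
qed

lemma antisymmetric_sum:
  assumes "\<And>i. i \<in> I \<Longrightarrow> antisymmetric G (g i)"
  shows "antisymmetric G (\<lambda>h. \<Sum>i\<in>I. g i h)"
  using assms unfolding antisymmetric_def by (subst sum.swap) simp

lemma antisymmetric_del_edges: "antisymmetric G g \<Longrightarrow> antisymmetric (del_edges G X) g"
  unfolding antisymmetric_def del_edges_def by simp

lemma conserved_del_edges:
  assumes G: "is_graph G" and g: "conserved G g" and X: "\<And>h. h \<in> \<Union>X \<Longrightarrow> g h = 0"
  shows "conserved (del_edges G X) g"
  unfolding conserved_def
proof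
  fix v assume "v \<in> verts (del_edges G X)"
  then have v: "v \<in> verts G" by (simp add: del_edges_def)
  have "sum g (halfs_at (del_edges G X) v) = sum g (halfs_at G v)"
    using X is_graph_finite_halfs[OF G]
    by (intro sum.mono_neutral_left) (auto simp: halfs_at_def del_edges_def)
  then show "sum g (halfs_at (del_edges G X) v) = 0" using g v unfolding conserved_def by simp
qed

lemma incidence_sum_antisymmetric:
  assumes G: "is_graph G" and D: "directed_version G tail" and g: "antisymmetric G g"
  shows "(\<Sum>e\<in>edges G. incidence G tail v e * g (tail e)) = sum g (halfs_at G v)"
proof -
  have "incidence G tail v e * g (tail e) = (\<Sum>h\<in>e. if inc G h = v then g h else 0)"
    if e: "e \<in> edges G" for e
    using sum_edge_tail_head[OF G D e, of "\<lambda>h. if inc G h = v then g h else 0"]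
      antisymmetric_head[OF G D g e] by (simp add: incidence_def algebra_simps)
  then have "(\<Sum>e\<in>edges G. incidence G tail v e * g (tail e))
      = (\<Sum>e\<in>edges G. \<Sum>h\<in>e. if inc G h = v then g h else 0)"
    by (rule sum.cong[OF refl])
  also have "\<dots> = sum g (halfs_at G v)"
    by (simp add: halfs_at_def sum_halfs_by_edges[OF G] sum.inter_filter is_graph_finite_halfs[OF G])
  finally show ?thesis .
qed

lemma Delta_sum_antisymmetric:
  assumes G: "is_graph G" and D: "directed_version G tail" and g: "antisymmetric G g"
  shows "(\<Sum>e\<in>edges G. g (tail e) * Delta tail ori e t) = sum g (halfs G \<inter> ori t)"
proof -
  have "g (tail e) * Delta tail ori e t = (\<Sum>h\<in>e. if h \<in> ori t then g h else 0)"
    if e: "e \<in> edges G" for e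
  proof -
    define a b where "a = tail e" and "b = head tail e"
    have ab: "a \<noteq> b" "e = {a, b}" using edge_eq_tail_head[OF G D e] unfolding a_def b_def by auto
    have gb: "g b = - g a" using antisymmetric_head[OF G D g e] unfolding a_def b_def .
    have "Delta tail ori e t = (if a \<in> ori t \<and> b \<notin> ori t then 1
        else if b \<in> ori t \<and> a \<notin> ori t then -1 else 0)"
      unfolding Delta_def a_def[symmetric] b_def[symmetric] using ab by auto
    then show ?thesis unfolding a_def[symmetric] using ab gb by simp
  qed
  then have "(\<Sum>e\<in>edges G. g (tail e) * Delta tail ori e t)
      = (\<Sum>e\<in>edges G. \<Sum>h\<in>e. if h \<in> ori t then g h else 0)"
    by (rule sum.cong[OF refl])
  also have "\<dots> = sum g (halfs G \<inter> ori t)"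
    by (simp add: sum_halfs_by_edges[OF G] sum.inter_restrict is_graph_finite_halfs[OF G])
  finally show ?thesis .
qed

lemma antisymmetric_sum_edge_closed:
  assumes G: "is_graph G" and g: "antisymmetric G g" and H: "H \<subseteq> halfs G"
    and closed: "\<And>e h. e \<in> edges G \<Longrightarrow> h \<in> e \<Longrightarrow> h \<in> H \<Longrightarrow> e \<subseteq> H"
  shows "sum g H = 0"
proof -
  have "H \<subseteq> \<Union>{e\<in>edges G. e \<subseteq> H}"
  proof
    fix h assume h: "h \<in> H"
    then obtain e where "e \<in> edges G" "h \<in> e" using H is_graph_Union_edges[OF G] by auto
    with closed h show "h \<in> \<Union>{e\<in>edges G. e \<subseteq> H}" by blast
  qed
  then have "H = \<Union>{e\<in>edges G. e \<subseteq> H}" by blast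
  then have "sum g H = (\<Sum>e\<in>{e\<in>edges G. e \<subseteq> H}. sum g e)"
    using sum_Union_edges[OF G, of "{e\<in>edges G. e \<subseteq> H}" g] by auto
  also have "\<dots> = 0" using g unfolding antisymmetric_def by simp
  finally show ?thesis .
qed

lemma conserved_sum_edges_restricted:
  assumes G: "is_graph G" and g: "conserved G g" and S: "S \<subseteq> verts G"
  shows "(\<Sum>e\<in>edges G. sum g {h\<in>e. inc G h \<in> S}) = 0"
proof -
  have fin: "finite {h\<in>halfs G. inc G h \<in> S}" using is_graph_finite_halfs[OF G] by simp
  have "(\<Sum>e\<in>edges G. sum g {h\<in>e. inc G h \<in> S}) = sum g {h\<in>halfs G. inc G h \<in> S}"
    using sum_halfs_by_edges[OF G, of "\<lambda>h. if inc G h \<in> S then g h else 0"]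
    by (simp add: sum.inter_filter is_graph_finite_edge[OF G] is_graph_finite_halfs[OF G])
  also have "\<dots> = (\<Sum>v\<in>S. sum g {h\<in>{h\<in>halfs G. inc G h \<in> S}. inc G h = v})"
    by (rule sum.group[symmetric, OF fin finite_subset[OF S is_graph_finite_verts[OF G]]]) auto
  also have "\<dots> = (\<Sum>v\<in>S. sum g {h\<in>halfs G. inc G h = v})"
    by (intro sum.cong refl arg_cong[where f = "sum g"]) auto
  also have "\<dots> = 0" using g S unfolding conserved_def halfs_at_def by (simp add: subset_iff)
  finally show ?thesis .
qed

definition crossing_sign :: "('v,'h) hgraph \<Rightarrow> 'v set \<Rightarrow> 'h set \<Rightarrow> 'h \<Rightarrow> rat" where
  "crossing_sign G S e h = (if (\<exists>x\<in>e. inc G x \<in> S) \<and> (\<exists>x\<in>e. inc G x \<notin> S)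
    then if inc G h \<in> S then 1 else -1 else 0)"

lemma sum_edge_inside:
  assumes G: "is_graph G" and anti: "antisymmetric G g" and e: "e \<in> edges G" and h: "h \<in> e"
  shows "sum g {x\<in>e. inc G x \<in> S} = crossing_sign G S e h * g h"
proof -
  obtain x y where xy: "x \<noteq> y" "e = {x, y}" by (rule is_graph_edgeE[OF G e])
  have "sum g e = 0" using anti e unfolding antisymmetric_def by simp
  then have gy: "g y = - g x" using xy by (simp add: eq_neg_iff_add_eq_0 add.commute)
  have hxy: "h = x \<or> h = y" using h xy(2) by simp
  have crossing: "crossing_sign G S e h = (if inc G h \<in> S then 1 else -1)"
    if "inc G u \<in> S" "inc G v \<notin> S" "{u, v} = e" for u v
    unfolding crossing_sign_def using that by auto
  consider "inc G x \<in> S \<longleftrightarrow> inc G y \<in> S" | "inc G x \<in> S" "inc G y \<notin> S" | "inc G y \<in> S" "inc G x \<notin> S"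
    by blast
  then show ?thesis
  proof cases
    case 1
    then have "crossing_sign G S e h = 0" unfolding crossing_sign_def xy(2) by auto
    moreover have "{z\<in>e. inc G z \<in> S} = e \<or> {z\<in>e. inc G z \<in> S} = {}" using 1 xy(2) by auto
    ultimately show ?thesis using \<open>sum g e = 0\<close> by (metis mult_zero_left sum.empty)
  next
    case 2
    then have "{z\<in>e. inc G z \<in> S} = {x}" using xy by auto
    then have "sum g {z\<in>e. inc G z \<in> S} = g x" by simp
    moreover from hxy have "crossing_sign G S e h * g h = g x"
    proof
      assume "h = y"
      then show ?thesis using crossing[OF 2 xy(2)[symmetric]] 2(2) gy by simp
    qed (use crossing[OF 2 xy(2)[symmetric]] 2(1) in simp)
    ultimately show ?thesis by simp
  next
    case 3
    have yx: "{y, x} = e" using xy(2) by auto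
    from 3 have "{z\<in>e. inc G z \<in> S} = {y}" using xy by auto
    then have "sum g {z\<in>e. inc G z \<in> S} = g y" by simp
    moreover from hxy have "crossing_sign G S e h * g h = g y"
    proof
      assume "h = x"
      then show ?thesis using crossing[OF 3 yx] 3(2) gy by simp
    qed (use crossing[OF 3 yx] 3(1) in simp)
    ultimately show ?thesis by simp
  qed
qed

lemma circulation_across_cut:
  assumes G: "is_graph G" and anti: "antisymmetric G g" and cons: "conserved G g" and S: "S \<subseteq> verts G"
    and sel: "\<And>e. e \<in> edges G \<Longrightarrow> sel e \<in> e"
  shows "(\<Sum>e\<in>edges G. crossing_sign G S e (sel e) * g (sel e)) = 0"
proof -
  have "(\<Sum>e\<in>edges G. crossing_sign G S e (sel e) * g (sel e)) = (\<Sum>e\<in>edges G. sum g {x\<in>e. inc G x \<in> S})"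
    using sum_edge_inside[OF G anti _ sel] by simp
  also have "\<dots> = 0" by (rule conserved_sum_edges_restricted[OF G cons S])
  finally show ?thesis .
qed

lemma circulation_in_cycle_space:
  assumes G: "is_graph G" and D: "directed_version G tail"
    and anti: "antisymmetric G g" and cons: "conserved G g"
  shows "(\<lambda>e. if e \<in> edges G then g (tail e) else 0) \<in> cycle_space G tail"
  unfolding cycle_space_def
proof (intro CollectI conjI allI impI ballI)
  fix v assume v: "v \<in> verts G"
  have "(\<Sum>e\<in>edges G. incidence G tail v e * (if e \<in> edges G then g (tail e) else 0))
      = (\<Sum>e\<in>edges G. incidence G tail v e * g (tail e))" by simp
  also have "\<dots> = sum g (halfs_at G v)" by (rule incidence_sum_antisymmetric[OF G D anti])
  also have "\<dots> = 0" using cons v unfolding conserved_def by simp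
  finally show "(\<Sum>e\<in>edges G. incidence G tail v e * (if e \<in> edges G then g (tail e) else 0)) = 0" .
qed simp

lemma lin_span_annihilated:
  fixes D :: "'e \<Rightarrow> 't \<Rightarrow> rat"
  assumes z: "z \<in> lin_span S"
    and S: "\<And>x. x \<in> S \<Longrightarrow> (\<Sum>t\<in>X. a t * (\<Sum>e\<in>A. x e * D e t)) = 0"
  shows "(\<Sum>t\<in>X. a t * (\<Sum>e\<in>A. z e * D e t)) = 0"
proof -
  obtain T c where T: "finite T" "T \<subseteq> S" and z_eq: "z = (\<lambda>e. \<Sum>x\<in>T. c x * x e)"
    using z unfolding lin_span_def by blast
  have "(\<Sum>t\<in>X. a t * (\<Sum>e\<in>A. z e * D e t))
      = (\<Sum>x\<in>T. c x * (\<Sum>t\<in>X. a t * (\<Sum>e\<in>A. x e * D e t)))"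
    unfolding z_eq sum_distrib_left sum_distrib_right
    by (subst sum.swap, subst (2) sum.swap) (simp add: sum_distrib_left ac_simps)
  also have "\<dots> = 0" using S T(2) by (simp add: subset_iff)
  finally show ?thesis .
qed

section \<open>Closed walks\<close>

lemma sum_lessThan_rotate: "(\<Sum>i<n. f (Suc i mod n)) = (\<Sum>i<n. f i)"
proof (cases n)
  case (Suc m)
  have "(\<Sum>i<Suc m. f (Suc i mod Suc m)) = (\<Sum>i<m. f (Suc i mod Suc m)) + f (Suc m mod Suc m)"
    by simp
  also have "(\<Sum>i<m. f (Suc i mod Suc m)) = (\<Sum>i<m. f (Suc i))" by (rule sum.cong) auto
  finally have "(\<Sum>i<Suc m. f (Suc i mod Suc m)) = (\<Sum>i<m. f (Suc i)) + f 0" by simp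
  moreover have "(\<Sum>i<Suc m. f i) = f 0 + (\<Sum>i<m. f (Suc i))" by (rule sum.lessThan_Suc_shift)
  ultimately show ?thesis using Suc by (simp add: add.commute)
qed simp

lemma ex_Suc_mod_eq:
  assumes "(i::nat) < n"
  shows "\<exists>j<n. Suc j mod n = i"
proof (cases i)
  case 0
  then show ?thesis using assms by (intro exI[of _ "n - 1"]) auto
next
  case (Suc k)
  then show ?thesis using assms by (intro exI[of _ k]) auto
qed

lemma Suc_mod_less: "(j::nat) < n \<Longrightarrow> Suc j mod n < n"
  by (cases n) auto

lemma Suc_mod_inj: "(j::nat) < n \<Longrightarrow> j' < n \<Longrightarrow> Suc j mod n = Suc j' mod n \<Longrightarrow> j = j'"
  by (cases "Suc j = n"; cases "Suc j' = n") auto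

lemma Suc_add_mod_neq:
  assumes "(j::nat) < k" "Suc m < k"
  shows "(Suc j + m) mod k \<noteq> j"
proof (cases "Suc j + m < k")
  case False
  then have "(Suc j + m) mod k = Suc j + m - k" using assms by (simp add: le_mod_geq)
  then show ?thesis using assms False by simp
qed simp

lemma closed_walk_edge:
  "closed_walk G w \<Longrightarrow> i < length w \<Longrightarrow> {snd (w ! i), fst (w ! (Suc i mod length w))} \<in> edges G"
  unfolding closed_walk_def by blast

lemma closed_walk_step:
  assumes "closed_walk G w" "i < length w"
  shows "fst (w ! i) \<in> halfs G" "snd (w ! i) \<in> halfs G" "fst (w ! i) \<noteq> snd (w ! i)"
    "inc G (fst (w ! i)) = inc G (snd (w ! i))"
  using assms nth_mem[OF assms(2)] unfolding closed_walk_def dir_single_trans_def by blast+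

lemma walk_edges_nth: "i < length w \<Longrightarrow> {snd (w ! i), fst (w ! (Suc i mod length w))} \<in> walk_edges w"
  unfolding walk_edges_def by blast

lemma trans_set_iff: "s \<in> trans_set w \<longleftrightarrow> (\<exists>m<length w. s = {fst (w ! m), snd (w ! m)})"
  unfolding trans_set_def by (force simp: in_set_conv_nth)

definition walk_flow :: "('h \<times> 'h) list \<Rightarrow> 'h \<Rightarrow> rat" where
  "walk_flow w h = (\<Sum>i<length w. (if snd (w ! i) = h then 1 else 0) - (if fst (w ! i) = h then 1 else 0))"

lemma closed_walk_exits_eq_entries:
  fixes G :: "('v,'h) hgraph"
  assumes G: "is_graph G" and w: "closed_walk G w" and e: "{a, b} \<in> edges G"
  shows "(\<Sum>i<length w. (if snd (w ! i) = b then 1 else 0)) = (\<Sum>i<length w. (if fst (w ! i) = a then 1 else 0) :: 'a::semiring_1)"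
proof -
  let ?n = "length w"
  have "snd (w ! i) = b \<longleftrightarrow> fst (w ! (Suc i mod ?n)) = a" if i: "i < ?n" for i
  proof -
    have ei: "{snd (w ! i), fst (w ! (Suc i mod ?n))} \<in> edges G" by (rule closed_walk_edge[OF w i])
    have "snd (w ! i) \<noteq> fst (w ! (Suc i mod ?n))" by (rule is_graph_edge_neq[OF G ei])
    moreover have "a \<noteq> b" by (rule is_graph_edge_neq[OF G e])
    ultimately show ?thesis using is_graph_edges_disjoint[OF G ei e] by blast
  qed
  then have "(\<Sum>i<?n. (if snd (w ! i) = b then 1 else 0)) = (\<Sum>i<?n. (if fst (w ! (Suc i mod ?n)) = a then 1 else 0) :: 'a)"
    by (intro sum.cong) auto
  also have "\<dots> = (\<Sum>i<?n. (if fst (w ! i) = a then 1 else 0))"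
    by (rule sum_lessThan_rotate)
  finally show ?thesis .
qed

lemma walk_flow_antisymmetric:
  fixes G :: "('v,'h) hgraph" and w :: "('h \<times> 'h) list"
  assumes G: "is_graph G" and w: "closed_walk G w"
  shows "antisymmetric G (walk_flow w)"
  unfolding antisymmetric_def
proof
  fix e assume e: "e \<in> edges G"
  obtain a b where ab: "a \<noteq> b" "e = {a, b}" using is_graph_edgeE[OF G e] .
  have "{a, b} \<in> edges G" "{b, a} \<in> edges G" using e ab by (auto simp: insert_commute)
  note closed_walk_exits_eq_entries[OF G w this(1), where 'a = rat]
    closed_walk_exits_eq_entries[OF G w this(2), where 'a = rat]
  then show "sum (walk_flow w) e = 0"
    using ab by (simp add: walk_flow_def sum_subtractf)
qed

lemma walk_flow_conserved:
  fixes G :: "('v,'h) hgraph" and w :: "('h \<times> 'h) list"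
  assumes G: "is_graph G" and w: "closed_walk G w"
  shows "conserved G (walk_flow w)"
  unfolding conserved_def
proof
  fix v assume "v \<in> verts G"
  let ?H = "halfs_at G v"
  have fin: "finite ?H" using is_graph_finite_halfs[OF G] by (simp add: halfs_at_def)
  have "sum (walk_flow w) ?H
      = (\<Sum>i<length w. \<Sum>h\<in>?H. (if snd (w ! i) = h then 1 else 0) - (if fst (w ! i) = h then 1 else 0))"
    unfolding walk_flow_def by (rule sum.swap)
  also have "\<dots> = 0"
  proof (rule sum.neutral, rule ballI)
    fix i assume "i \<in> {..<length w}"
    then show "(\<Sum>h\<in>?H. (if snd (w ! i) = h then 1 else 0) - (if fst (w ! i) = h then 1 else 0)) = (0::rat)"
      using closed_walk_step[OF w] fin by (simp add: sum_subtractf halfs_at_def)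
  qed
  finally show "sum (walk_flow w) ?H = 0" .
qed

lemma CM_eq_walk_flow:
  assumes G: "is_graph G" and D: "directed_version G tail" and w: "closed_walk G w"
    and e: "e \<in> edges G"
  shows "CM tail w e = walk_flow w (tail e)"
proof -
  let ?n = "length w"
  define a b where "a = tail e" and "b = head tail e"
  have ab: "a \<noteq> b" "e = {a, b}" using edge_eq_tail_head[OF G D e] unfolding a_def b_def by auto
  have step: "of_int (if {snd (w ! i), fst (w ! (Suc i mod ?n))} = e
      then if snd (w ! i) = tail e then 1 else -1 else 0)
      = (if snd (w ! i) = a then 1 else 0) - (if snd (w ! i) = b then 1 else (0::rat))"
    if i: "i < ?n" for i
  proof -
    have ei: "{snd (w ! i), fst (w ! (Suc i mod ?n))} \<in> edges G" by (rule closed_walk_edge[OF w i])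
    have "{snd (w ! i), fst (w ! (Suc i mod ?n))} = e \<longleftrightarrow> snd (w ! i) \<in> e"
      using is_graph_edges_disjoint[OF G ei e] by blast
    then show ?thesis using ab unfolding a_def by auto
  qed
  have "CM tail w e = (\<Sum>i<?n. (if snd (w ! i) = a then 1 else 0) - (if snd (w ! i) = b then 1 else (0::rat)))"
    unfolding CM_def sigma_vec_def sigma_def of_int_sum using step by (intro sum.cong) auto
  also have "\<dots> = walk_flow w a"
    using closed_walk_exits_eq_entries[OF G w, of a b] ab e
    by (simp add: walk_flow_def sum_subtractf)
  finally show ?thesis unfolding a_def .
qed

lemma walk_halfs_Cons: "walk_halfs (p # w) = fst p # snd p # walk_halfs w"
  unfolding walk_halfs_def by (cases p) simp

lemma length_walk_halfs: "length (walk_halfs w) = 2 * length w"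
  by (induction w) (auto simp: walk_halfs_Cons walk_halfs_def)

lemma nth_walk_halfs:
  "a < 2 * length w \<Longrightarrow> walk_halfs w ! a = (if even a then fst (w ! (a div 2)) else snd (w ! (a div 2)))"
proof (induction w arbitrary: a)
  case (Cons p w)
  show ?case
  proof (cases a)
    case (Suc a1)
    with Cons show ?thesis by (cases a1) (auto simp: walk_halfs_Cons)
  qed (simp add: walk_halfs_Cons)
qed simp

lemma distinct_walk_halfsD:
  assumes d: "distinct (walk_halfs w)" and i: "i < length w" and j: "j < length w"
  shows "fst (w ! i) = fst (w ! j) \<Longrightarrow> i = j" "snd (w ! i) = snd (w ! j) \<Longrightarrow> i = j"
    "fst (w ! i) \<noteq> snd (w ! j)"
proof -
  have f: "walk_halfs w ! (2 * k) = fst (w ! k)" and s: "walk_halfs w ! (2 * k + 1) = snd (w ! k)"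
    if "k < length w" for k
    using nth_walk_halfs[of "2 * k" w] nth_walk_halfs[of "2 * k + 1" w] that by simp_all
  note inj = nth_eq_iff_index_eq[OF d] and L = length_walk_halfs[of w]
  show "fst (w ! i) = fst (w ! j) \<Longrightarrow> i = j"
    using inj[of "2 * i" "2 * j"] f[OF i] f[OF j] L i j by simp
  show "snd (w ! i) = snd (w ! j) \<Longrightarrow> i = j"
    using inj[of "2 * i + 1" "2 * j + 1"] s[OF i] s[OF j] L i j by simp
  show "fst (w ! i) \<noteq> snd (w ! j)"
  proof
    assume "fst (w ! i) = snd (w ! j)"
    then have "2 * i = 2 * j + 1" using inj[of "2 * i" "2 * j + 1"] f[OF i] s[OF j] L i j by simp
    then show False by presburger
  qed
qed

lemma distinct_walk_halfsI:
  assumes "\<And>i j. i < length w \<Longrightarrow> j < length w \<Longrightarrow> fst (w ! i) = fst (w ! j) \<Longrightarrow> i = j"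
    and "\<And>i j. i < length w \<Longrightarrow> j < length w \<Longrightarrow> snd (w ! i) = snd (w ! j) \<Longrightarrow> i = j"
    and "\<And>i j. i < length w \<Longrightarrow> j < length w \<Longrightarrow> fst (w ! i) \<noteq> snd (w ! j)"
  shows "distinct (walk_halfs w)"
  unfolding distinct_conv_nth length_walk_halfs
proof (intro allI impI)
  fix a b assume a: "a < 2 * length w" and b: "b < 2 * length w" and ab: "a \<noteq> b"
  then have "a div 2 < length w" "b div 2 < length w" by auto
  then show "walk_halfs w ! a \<noteq> walk_halfs w ! b"
    using assms[of "a div 2" "b div 2"] assms(3)[of "b div 2" "a div 2"] ab
    unfolding nth_walk_halfs[OF a] nth_walk_halfs[OF b]
    by (cases "even a"; cases "even b") (auto elim!: evenE oddE)
qed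

lemma walk_edges_inj:
  assumes d: "distinct (walk_halfs w)" and i: "i < length w" and j: "j < length w"
    and eq: "{snd (w ! i), fst (w ! (Suc i mod length w))} = {snd (w ! j), fst (w ! (Suc j mod length w))}"
  shows "i = j"
proof -
  have "snd (w ! i) = snd (w ! j) \<or> snd (w ! i) = fst (w ! (Suc j mod length w))" using eq by blast
  moreover have "Suc j mod length w < length w" using j by (simp add: Suc_mod_less)
  ultimately show ?thesis using distinct_walk_halfsD[OF d i j] distinct_walk_halfsD(3)[OF d _ i] by metis
qed

lemma walk_flow_snd:
  assumes d: "distinct (walk_halfs w)" and j: "j < length w"
  shows "walk_flow w (snd (w ! j)) = 1"
proof -
  have "walk_flow w (snd (w ! j)) = (\<Sum>i<length w. if i = j then 1 else 0)"
    unfolding walk_flow_def using distinct_walk_halfsD[OF d _ j] by (intro sum.cong) auto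
  then show ?thesis using j by simp
qed

lemma walk_flow_fst:
  assumes d: "distinct (walk_halfs w)" and j: "j < length w"
  shows "walk_flow w (fst (w ! j)) = -1"
proof -
  have "(if snd (w ! i) = fst (w ! j) then 1 else 0) - (if fst (w ! i) = fst (w ! j) then 1 else 0)
      = - (if i = j then 1 else (0::rat))" if i: "i < length w" for i
    using distinct_walk_halfsD[OF d i j] distinct_walk_halfsD(3)[OF d j i] by auto
  then have "walk_flow w (fst (w ! j)) = (\<Sum>i<length w. - (if i = j then 1 else 0))"
    unfolding walk_flow_def by (intro sum.cong) auto
  then show ?thesis using j by (simp add: sum_negf)
qed

lemma walk_flow_traversed:
  assumes w: "circuit_walk G w" and e: "e \<in> walk_edges w" and h: "h \<in> e"
  shows "walk_flow w h \<noteq> 0"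
proof -
  have d: "distinct (walk_halfs w)" using w unfolding circuit_walk_def by simp
  obtain j where j: "j < length w" "e = {snd (w ! j), fst (w ! (Suc j mod length w))}"
    using e unfolding walk_edges_def by blast
  then have "Suc j mod length w < length w" by (simp add: Suc_mod_less)
  then show ?thesis using h j walk_flow_snd[OF d j(1)] walk_flow_fst[OF d] by auto
qed

lemma walk_flow_untraversed:
  assumes G: "is_graph G" and w: "closed_walk G w" and e: "e \<in> edges G" "e \<notin> walk_edges w"
    and h: "h \<in> e"
  shows "walk_flow w h = 0"
  unfolding walk_flow_def
proof (rule sum.neutral, rule ballI)
  let ?n = "length w"
  fix i assume "i \<in> {..<?n}"
  then have i: "i < ?n" by simp
  have not_on: "h \<notin> {snd (w ! j), fst (w ! (Suc j mod ?n))}" if j: "j < ?n" for j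
    using is_graph_edges_disjoint[OF G closed_walk_edge[OF w j] e(1) _ h] walk_edges_nth[OF j] e(2)
    by blast
  obtain j where "j < ?n" "Suc j mod ?n = i" using ex_Suc_mod_eq[OF i] by blast
  then show "(if snd (w ! i) = h then 1 else 0) - (if fst (w ! i) = h then 1 else 0) = (0::rat)"
    using not_on[OF i] not_on[of j] by auto
qed

lemma walk_halfs_rotate1: "walk_halfs (rotate1 w) = rotate 2 (walk_halfs w)"
  by (cases w) (simp_all add: walk_halfs_def numeral_2_eq_2 case_prod_beta)

lemma walk_halfs_rotate: "walk_halfs (rotate k w) = rotate (2 * k) (walk_halfs w)"
  by (induction k) (simp_all add: walk_halfs_rotate1 rotate_rotate)

lemma closed_walk_rotate:
  assumes w: "closed_walk G w"
  shows "closed_walk G (rotate k w)"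
  unfolding closed_walk_def
proof (intro conjI ballI allI impI)
  show "dir_single_trans G p" if "p \<in> set (rotate k w)" for p
    using w that unfolding closed_walk_def by simp
  fix i assume i: "i < length (rotate k w)"
  let ?n = "length w"
  have "0 < ?n" using i by auto
  then have j: "(k + i) mod ?n < ?n" by (rule mod_less_divisor)
  have "(k + Suc i mod ?n) mod ?n = Suc ((k + i) mod ?n) mod ?n" by (simp add: mod_add_right_eq mod_Suc_eq)
  then show "{snd (rotate k w ! i), fst (rotate k w ! (Suc i mod length (rotate k w)))} \<in> edges G"
    using closed_walk_edge[OF w j] i nth_rotate[of i w k] nth_rotate[of "Suc i mod ?n" w k]
      Suc_mod_less[of i ?n] by simp
qed

lemma circuit_walk_rotate: "circuit_walk G w \<Longrightarrow> circuit_walk G (rotate k w)"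
  unfolding circuit_walk_def by (simp add: closed_walk_rotate walk_halfs_rotate)

lemma trans_set_rotate: "trans_set (rotate k w) = trans_set w"
  by (simp add: trans_set_def)

lemma circuit_walk_starting_at:
  assumes w: "circuit_walk G w" and s: "s \<in> trans_set w"
  obtains c where "circuit_walk G c" "trans_set c = trans_set w" "s = {fst (c ! 0), snd (c ! 0)}"
proof -
  obtain m where m: "m < length w" "s = {fst (w ! m), snd (w ! m)}" using s trans_set_iff[of s w] by auto
  have "w \<noteq> []" using m(1) by auto
  then have "rotate m w ! 0 = w ! m" using m(1) nth_rotate[of 0 w m] by simp
  then show thesis using that[of "rotate m w"] circuit_walk_rotate[OF w, of m] m(2)
    by (simp add: trans_set_rotate)
qed

definition arc_flow :: "('h \<times> 'h) list \<Rightarrow> nat set \<Rightarrow> 'h \<Rightarrow> rat" where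
  "arc_flow c J h = (\<Sum>j\<in>J. (if h = snd (c ! j) then 1 else 0) - (if h = fst (c ! (Suc j mod length c)) then 1 else 0))"

lemma arc_flow_antisymmetric:
  assumes G: "is_graph G" and c: "closed_walk G c" and J: "J \<subseteq> {..<length c}"
  shows "antisymmetric G (arc_flow c J)"
  unfolding antisymmetric_def
proof
  fix e assume e: "e \<in> edges G"
  let ?n = "length c"
  have "(\<Sum>h\<in>e. (if h = snd (c ! j) then 1 else 0) - (if h = fst (c ! (Suc j mod ?n)) then 1 else 0))
      = (0::rat)" if j: "j \<in> J" for j
  proof -
    have ej: "{snd (c ! j), fst (c ! (Suc j mod ?n))} \<in> edges G" using closed_walk_edge[OF c] j J by blast
    have "snd (c ! j) \<in> e \<longleftrightarrow> fst (c ! (Suc j mod ?n)) \<in> e"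
      using is_graph_edges_disjoint[OF G ej e] by blast
    then show ?thesis using is_graph_finite_edge[OF G e] by (simp add: sum_subtractf)
  qed
  then show "sum (arc_flow c J) e = 0" unfolding arc_flow_def by (subst sum.swap) simp
qed

lemma arc_flow_untraversed:
  assumes G: "is_graph G" and c: "closed_walk G c" and J: "J \<subseteq> {..<length c}"
    and e: "e \<in> edges G" "\<forall>j\<in>J. {snd (c ! j), fst (c ! (Suc j mod length c))} \<noteq> e" and h: "h \<in> e"
  shows "arc_flow c J h = 0"
  unfolding arc_flow_def
proof (rule sum.neutral, rule ballI)
  fix j assume j: "j \<in> J"
  have "{snd (c ! j), fst (c ! (Suc j mod length c))} \<in> edges G" using closed_walk_edge[OF c] j J by blast
  then have "h \<notin> {snd (c ! j), fst (c ! (Suc j mod length c))}"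
    using is_graph_edges_disjoint[OF G _ e(1) _ h] e(2) j by blast
  then show "(if h = snd (c ! j) then 1 else 0) - (if h = fst (c ! (Suc j mod length c)) then 1 else 0) = (0::rat)"
    by auto
qed

lemma arc_flow_snd:
  assumes d: "distinct (walk_halfs c)" and J: "J \<subseteq> {..<length c}" and m: "m < length c"
  shows "arc_flow c J (snd (c ! m)) = (if m \<in> J then 1 else 0)"
proof -
  have "(if snd (c ! m) = snd (c ! j) then 1 else 0) - (if snd (c ! m) = fst (c ! (Suc j mod length c)) then 1 else 0)
      = (if j = m then 1 else (0::rat))" if j: "j \<in> J" for j
  proof -
    have j': "j < length c" using j J by blast
    have "snd (c ! m) \<noteq> fst (c ! (Suc j mod length c))"
      using distinct_walk_halfsD(3)[OF d Suc_mod_less[OF j'] m] by metis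
    moreover have "snd (c ! m) = snd (c ! j) \<longleftrightarrow> j = m" using distinct_walk_halfsD(2)[OF d m j'] by auto
    ultimately show ?thesis by simp
  qed
  then have "arc_flow c J (snd (c ! m)) = (\<Sum>j\<in>J. if j = m then 1 else 0)"
    unfolding arc_flow_def by (rule sum.cong[OF refl])
  then show ?thesis using finite_subset[OF J] by simp
qed

lemma arc_flow_fst:
  assumes d: "distinct (walk_halfs c)" and J: "J \<subseteq> {..<length c}" and j: "j < length c"
  shows "arc_flow c J (fst (c ! (Suc j mod length c))) = - (if j \<in> J then 1 else 0)"
proof -
  let ?n = "length c"
  have "(if fst (c ! (Suc j mod ?n)) = snd (c ! i) then 1 else 0)
      - (if fst (c ! (Suc j mod ?n)) = fst (c ! (Suc i mod ?n)) then 1 else 0)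
      = - (if i = j then 1 else (0::rat))" if i: "i \<in> J" for i
  proof -
    have i': "i < ?n" using i J by blast
    have "fst (c ! (Suc j mod ?n)) \<noteq> snd (c ! i)"
      using distinct_walk_halfsD(3)[OF d Suc_mod_less[OF j] i'] .
    moreover have "fst (c ! (Suc j mod ?n)) = fst (c ! (Suc i mod ?n)) \<longleftrightarrow> i = j"
    proof
      assume "fst (c ! (Suc j mod ?n)) = fst (c ! (Suc i mod ?n))"
      then have "Suc j mod ?n = Suc i mod ?n"
        by (rule distinct_walk_halfsD(1)[OF d Suc_mod_less[OF j] Suc_mod_less[OF i']])
      then show "i = j" using Suc_mod_inj[OF i' j] by simp
    qed simp
    ultimately show ?thesis by simp
  qed
  then have "arc_flow c J (fst (c ! (Suc j mod ?n))) = (\<Sum>i\<in>J. - (if i = j then 1 else 0))"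
    unfolding arc_flow_def by (rule sum.cong[OF refl])
  then show ?thesis using finite_subset[OF J] by (simp add: sum_negf)
qed

lemma arc_flow_off_walk:
  assumes "\<And>i. i < length c \<Longrightarrow> h \<noteq> fst (c ! i) \<and> h \<noteq> snd (c ! i)" and J: "J \<subseteq> {..<length c}"
  shows "arc_flow c J h = 0"
  unfolding arc_flow_def
proof (rule sum.neutral, rule ballI)
  fix j assume "j \<in> J"
  then have "j < length c" using J by blast
  then show "(if h = snd (c ! j) then 1 else 0) - (if h = fst (c ! (Suc j mod length c)) then 1 else 0) = (0::rat)"
    using assms(1)[of j] assms(1)[OF Suc_mod_less] by simp
qed

lemma transition_inj:
  assumes d: "distinct (walk_halfs c)" and "m < length c" "m' < length c"
  shows "{fst (c ! m), snd (c ! m)} = {fst (c ! m'), snd (c ! m')} \<longleftrightarrow> m = m'"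
  using distinct_walk_halfsD[OF d assms(2,3)] distinct_walk_halfsD(3)[OF d assms(3,2)]
  by (auto simp: doubleton_eq_iff)

lemma sum_arc_flow_step:
  assumes d: "distinct (walk_halfs c)" and J: "J \<subseteq> {..<length c}" and j: "j < length c"
  shows "sum (arc_flow c J) {fst (c ! (Suc j mod length c)), snd (c ! (Suc j mod length c))}
    = (if Suc j mod length c \<in> J then 1 else 0) - (if j \<in> J then 1 else 0)"
  using arc_flow_snd[OF d J Suc_mod_less[OF j]] arc_flow_fst[OF d J j]
    distinct_walk_halfsD(3)[OF d Suc_mod_less[OF j] Suc_mod_less[OF j]] by simp

lemma sum_arc_flow_arcs:
  assumes d: "distinct (walk_halfs c)" and q: "0 < q" "q < length c" and m: "m < length c"
  shows "sum (arc_flow c {..<q}) {fst (c ! m), snd (c ! m)} = (if m = 0 then 1 else 0) - (if m = q then 1 else 0)"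
    "sum (arc_flow c {q..<length c}) {fst (c ! m), snd (c ! m)} = (if m = q then 1 else 0) - (if m = 0 then 1 else 0)"
proof -
  let ?n = "length c"
  obtain j where j: "j < ?n" "Suc j mod ?n = m" using ex_Suc_mod_eq[OF m] by blast
  have "{..<q} \<subseteq> {..<?n}" "{q..<?n} \<subseteq> {..<?n}" using q(2) by auto
  note sums = sum_arc_flow_step[OF d this(1) j(1)] sum_arc_flow_step[OF d this(2) j(1)]
  have "sum (arc_flow c {..<q}) {fst (c ! m), snd (c ! m)} = (if m = 0 then 1 else 0) - (if m = q then 1 else 0)
    \<and> sum (arc_flow c {q..<?n}) {fst (c ! m), snd (c ! m)} = (if m = q then 1 else 0) - (if m = 0 then 1 else 0)"
  proof (cases "Suc j = ?n")
    case True
    then have "m = 0" "q \<le> j" using j q(2) by auto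
    then show ?thesis using sums q(1) True j(2) by simp
  next
    case False
    then have "m = Suc j" using j by simp
    then show ?thesis using sums False j by auto
  qed
  then show "sum (arc_flow c {..<q}) {fst (c ! m), snd (c ! m)} = (if m = 0 then 1 else 0) - (if m = q then 1 else 0)"
    "sum (arc_flow c {q..<length c}) {fst (c ! m), snd (c ! m)} = (if m = q then 1 else 0) - (if m = 0 then 1 else 0)"
    by simp_all
qed

section \<open>Forests and fundamental circuits\<close>

lemma rtrancl_distinct_path:
  assumes "(x, y) \<in> r\<^sup>*"
  obtains xs where "xs \<noteq> []" "hd xs = x" "last xs = y" "distinct xs"
    "successively (\<lambda>u v. (u, v) \<in> r) xs"
proof -
  have "(\<lambda>u v. (u, v) \<in> r)\<^sup>*\<^sup>* x y" using assms by (simp add: rtrancl_def)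
  then obtain xs where "rtrancl_path (\<lambda>u v. (u, v) \<in> r) x xs y"
    by (auto simp: rtranclp_eq_rtrancl_path)
  then obtain xs' where p: "rtrancl_path (\<lambda>u v. (u, v) \<in> r) x xs' y" "distinct (x # xs')"
    by (rule rtrancl_path_distinct)
  have "last (x # xs') = y \<and> successively (\<lambda>u v. (u, v) \<in> r) (x # xs')"
    using p(1) by induction (auto simp: successively_Cons)
  then show thesis using that[of "x # xs'"] p(2) by simp
qed

definition joined_by :: "('v,'h) hgraph \<Rightarrow> 'h set set \<Rightarrow> ('v \<times> 'v) set" where
  "joined_by G B = {(inc G a, inc G b) | a b. {a, b} \<in> B}"

lemma joined_byI: "{a, b} \<in> B \<Longrightarrow> (inc G a, inc G b) \<in> joined_by G B"
  unfolding joined_by_def by blast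

lemma joined_by_sym: "sym (joined_by G B)"
proof (rule symI)
  fix x y assume "(x, y) \<in> joined_by G B"
  then obtain a b where "x = inc G a" "y = inc G b" "{a, b} \<in> B"
    unfolding joined_by_def by auto
  then show "(y, x) \<in> joined_by G B" using joined_byI[of b a B G] by (simp add: insert_commute)
qed

lemma joined_by_rtrancl_sym: "(x, y) \<in> (joined_by G B)\<^sup>* \<Longrightarrow> (y, x) \<in> (joined_by G B)\<^sup>*"
  using sym_rtrancl[OF joined_by_sym] by (rule symD)

lemma circuit_walk_joins_ends:
  assumes w: "circuit_walk G w" and sub: "walk_edges w \<subseteq> insert {a, b} B"
    and ab: "{a, b} \<in> walk_edges w"
  shows "(inc G a, inc G b) \<in> (joined_by G B)\<^sup>*"
proof -
  let ?n = "length w" and ?R = "joined_by G B"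
  define vt where "vt i = inc G (fst (w ! i))" for i
  have W: "closed_walk G w" and d: "distinct (walk_halfs w)" using w unfolding circuit_walk_def by auto
  obtain j where j: "j < ?n" and ab_eq: "{a, b} = {snd (w ! j), fst (w ! (Suc j mod ?n))}"
    using ab unfolding walk_edges_def by blast
  have step: "(vt i, vt (Suc i mod ?n)) \<in> ?R" if i: "i < ?n" "i \<noteq> j" for i
  proof -
    have "{snd (w ! i), fst (w ! (Suc i mod ?n))} \<noteq> {a, b}"
      using walk_edges_inj[OF d i(1) j] i(2) ab_eq by metis
    then have "{snd (w ! i), fst (w ! (Suc i mod ?n))} \<in> B" using sub walk_edges_nth[OF i(1)] by blast
    from joined_byI[OF this] show ?thesis using closed_walk_step(4)[OF W i(1)] unfolding vt_def by simp
  qed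
  have around: "(vt (Suc j mod ?n), vt ((Suc j + m) mod ?n)) \<in> ?R\<^sup>*" if "m < ?n" for m
    using that
  proof (induction m)
    case (Suc m)
    have "(Suc j + m) mod ?n < ?n" using j by (intro mod_less_divisor) auto
    from step[OF this Suc_add_mod_neq[OF j Suc.prems]]
    have "(vt ((Suc j + m) mod ?n), vt ((Suc j + Suc m) mod ?n)) \<in> ?R"
      by (simp add: mod_Suc_eq)
    with Suc show ?case by (simp add: rtrancl_into_rtrancl)
  qed simp
  have "Suc j + (?n - 1) = j + ?n" using j by simp
  then have "(Suc j + (?n - 1)) mod ?n = j" using j by simp
  then have "(vt (Suc j mod ?n), vt j) \<in> ?R\<^sup>*" using around[of "?n - 1"] j by simp
  then have "(inc G (fst (w ! (Suc j mod ?n))), inc G (snd (w ! j))) \<in> ?R\<^sup>*"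
    using closed_walk_step(4)[OF W j] unfolding vt_def by simp
  moreover have "a = snd (w ! j) \<and> b = fst (w ! (Suc j mod ?n)) \<or> a = fst (w ! (Suc j mod ?n)) \<and> b = snd (w ! j)"
    using ab_eq by (simp add: doubleton_eq_iff)
  ultimately show ?thesis by (auto intro: joined_by_rtrancl_sym)
qed

lemma joined_by_distinct_path:
  assumes "(u, v) \<in> (joined_by G B)\<^sup>*"
  obtains xs m f where "distinct xs" "length xs = Suc m" "xs ! 0 = u" "xs ! m = v"
    "\<And>i. i < m \<Longrightarrow> {fst (f i), snd (f i)} \<in> B \<and> inc G (fst (f i)) = xs ! i \<and> inc G (snd (f i)) = xs ! Suc i"
proof -
  obtain xs where xs: "xs \<noteq> []" "hd xs = u" "last xs = v" "distinct xs"
      "successively (\<lambda>u v. (u, v) \<in> joined_by G B) xs"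
    by (rule rtrancl_distinct_path[OF assms])
  define m where "m = length xs - 1"
  have lx: "length xs = Suc m" using xs(1) unfolding m_def by simp
  have "\<exists>p. i < m \<longrightarrow> {fst p, snd p} \<in> B \<and> inc G (fst p) = xs ! i \<and> inc G (snd p) = xs ! Suc i" for i
  proof (cases "i < m")
    case True
    then have "(xs ! i, xs ! Suc i) \<in> joined_by G B" using successively_nth[OF xs(5), of i] lx by simp
    then obtain p q where "{p, q} \<in> B" "inc G p = xs ! i" "inc G q = xs ! Suc i"
      unfolding joined_by_def by auto
    then show ?thesis by (intro exI[of _ "(p, q)"]) simp
  qed simp
  then obtain f where "\<forall>i. i < m \<longrightarrow> {fst (f i), snd (f i)} \<in> B \<and> inc G (fst (f i)) = xs ! i
      \<and> inc G (snd (f i)) = xs ! Suc i"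
    by (metis choice)
  moreover have "xs ! 0 = u" using xs(1,2) by (simp add: hd_conv_nth)
  moreover have "xs ! m = v" using xs(1,3) unfolding m_def by (simp add: last_conv_nth)
  ultimately show thesis using that xs(4) lx by blast
qed

lemma circuit_walk_of_steps:
  fixes inn out :: "nat \<Rightarrow> 'h"
  assumes steps: "\<And>i. i \<le> m \<Longrightarrow> dir_single_trans G (inn i, out i)"
    and links: "\<And>i. i \<le> m \<Longrightarrow> {out i, inn (Suc i mod Suc m)} \<in> L" and L: "L \<subseteq> edges G"
    and distinct: "\<And>i j. i \<le> m \<Longrightarrow> j \<le> m \<Longrightarrow> inc G (inn i) = inc G (inn j) \<Longrightarrow> i = j"
  shows "circuit_walk G (map (\<lambda>i. (inn i, out i)) [0..<Suc m])"
    "walk_edges (map (\<lambda>i. (inn i, out i)) [0..<Suc m]) \<subseteq> L"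
proof -
  define w where "w = map (\<lambda>i. (inn i, out i)) [0..<Suc m]"
  have lw: "length w = Suc m" and wi: "\<And>i. i < Suc m \<Longrightarrow> w ! i = (inn i, out i)"
    unfolding w_def by (simp_all del: upt_Suc)
  have inc_out: "inc G (out i) = inc G (inn i)" and inn_out: "inn i \<noteq> out i" if "i \<le> m" for i
    using steps[OF that] unfolding dir_single_trans_def by simp_all
  have w_edges: "{snd (w ! i), fst (w ! (Suc i mod length w))} \<in> L" if "i < length w" for i
    using links[of i] wi[of i] wi[of "Suc i mod Suc m"] that lw by simp
  have "closed_walk G w"
    unfolding closed_walk_def
  proof (intro conjI ballI allI impI)
    fix p assume "p \<in> set w"
    then obtain i where "i < Suc m" "p = (inn i, out i)" unfolding w_def by (auto simp del: upt_Suc)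
    then show "dir_single_trans G p" using steps by simp
  next
    fix i assume "i < length w"
    from w_edges[OF this] show "{snd (w ! i), fst (w ! (Suc i mod length w))} \<in> edges G"
      using L by blast
  qed
  moreover have "distinct (walk_halfs w)"
  proof (rule distinct_walk_halfsI)
    fix i j assume "i < length w" "j < length w"
    then have ij: "i \<le> m" "j \<le> m" and w_ij: "w ! i = (inn i, out i)" "w ! j = (inn j, out j)"
      using wi lw by auto
    show "fst (w ! i) = fst (w ! j) \<Longrightarrow> i = j" "snd (w ! i) = snd (w ! j) \<Longrightarrow> i = j"
      using distinct[OF ij] inc_out[OF ij(1)] inc_out[OF ij(2)] unfolding w_ij by auto
    show "fst (w ! i) \<noteq> snd (w ! j)"
      using distinct[OF ij] inc_out[OF ij(2)] inn_out[OF ij(1)] unfolding w_ij by auto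
  qed
  ultimately show "circuit_walk G w" using lw unfolding circuit_walk_def by auto
  show "walk_edges w \<subseteq> L" unfolding walk_edges_def using w_edges by blast
qed

lemma path_step_ends_differ:
  assumes G: "is_graph G" and B: "B \<subseteq> edges G" and t: "{a, b} \<in> edges G" "{a, b} \<notin> B"
    and xs: "distinct xs" "length xs = Suc m"
    and f: "\<And>i. i < m \<Longrightarrow> {fst (f i), snd (f i)} \<in> B \<and> inc G (fst (f i)) = xs ! i \<and> inc G (snd (f i)) = xs ! Suc i"
    and i: "i \<le> m"
  shows "(if i = 0 then a else snd (f (i - 1))) \<noteq> (if i = m then b else fst (f i))"
proof
  assume eq: "(if i = 0 then a else snd (f (i - 1))) = (if i = m then b else fst (f i))"
  have same_edge: "e = e'" if "e \<in> edges G" "e' \<in> edges G" "h \<in> e" "h \<in> e'" for e e' h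
    using is_graph_edges_disjoint[OF G that] .
  have fB: "{fst (f i), snd (f i)} \<in> edges G" if "i < m" for i using f[OF that] B by blast
  consider "i = 0" "m = 0" | "i = 0" "0 < m" | "0 < i" "i = m" | "0 < i" "i < m"
    using i by linarith
  then show False
  proof cases
    case 1
    then show False using eq is_graph_edge_neq[OF G t(1)] by simp
  next
    case 2
    then have "{a, b} = {fst (f 0), snd (f 0)}" using same_edge[OF t(1) fB, of 0 a] eq by simp
    then show False using f[of 0] 2 t(2) by simp
  next
    case 3
    then have "{a, b} = {fst (f (m - 1)), snd (f (m - 1))}" using same_edge[OF t(1) fB, of "m - 1" b] eq by simp
    then show False using f[of "m - 1"] 3 t(2) by simp
  next
    case 4
    then have "snd (f (i - 1)) = fst (f i)" using eq by simp
    then have "{fst (f (i - 1)), snd (f (i - 1))} = {fst (f i), snd (f i)}"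
      using same_edge[OF fB fB, of "i - 1" i "fst (f i)"] 4 by simp
    then have "fst (f (i - 1)) = fst (f i) \<or> fst (f (i - 1)) = snd (f i)"
      by (auto simp: doubleton_eq_iff)
    moreover have "inc G (fst (f (i - 1))) = xs ! (i - 1)" "inc G (fst (f i)) = xs ! i"
      "inc G (snd (f i)) = xs ! Suc i"
      using f 4 by simp_all
    ultimately have "xs ! (i - 1) = xs ! i \<or> xs ! (i - 1) = xs ! Suc i" by metis
    moreover have "xs ! (i - 1) \<noteq> xs ! i" "xs ! (i - 1) \<noteq> xs ! Suc i"
      using nth_eq_iff_index_eq[OF xs(1), of "i - 1" i] nth_eq_iff_index_eq[OF xs(1), of "i - 1" "Suc i"]
        xs(2) 4 by auto
    ultimately show False by blast
  qed
qed

lemma circuit_walk_from_path: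
  assumes G: "is_graph G" and path: "(inc G a, inc G b) \<in> (joined_by G B)\<^sup>*"
    and t: "{a, b} \<in> edges G" "{a, b} \<notin> B" and B: "B \<subseteq> edges G"
  shows "\<exists>w. circuit_walk G w \<and> walk_edges w \<subseteq> insert {a, b} B"
proof -
  obtain xs m f where xs: "distinct xs" "length xs = Suc m" "xs ! 0 = inc G a" "xs ! m = inc G b"
    and f: "\<And>i. i < m \<Longrightarrow> {fst (f i), snd (f i)} \<in> B \<and> inc G (fst (f i)) = xs ! i
      \<and> inc G (snd (f i)) = xs ! Suc i"
    using joined_by_distinct_path[OF path] by blast
  define inn where "inn i = (if i = 0 then a else snd (f (i - 1)))" for i
  define out where "out i = (if i = m then b else fst (f i))" for i
  have inc_inn: "inc G (inn i) = xs ! i" and inc_out: "inc G (out i) = xs ! i" if "i \<le> m" for i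
    using that xs(3,4) f[of "i - 1"] f[of i] unfolding inn_def out_def by auto
  have edge_halfs: "p \<in> halfs G" "q \<in> halfs G" if "{p, q} \<in> edges G" for p q
    using that is_graph_Union_edges[OF G] by blast+
  have "dir_single_trans G (inn i, out i)" if i: "i \<le> m" for i
  proof -
    have "inn i \<in> halfs G" "out i \<in> halfs G"
      using i edge_halfs[OF t(1)] edge_halfs[OF subsetD[OF B conjunct1[OF f]]] unfolding inn_def out_def
      by auto
    moreover have "inn i \<noteq> out i"
      using path_step_ends_differ[OF G B t xs(1,2) f i] unfolding inn_def out_def .
    ultimately show ?thesis using inc_inn[OF i] inc_out[OF i] unfolding dir_single_trans_def by simp
  qed
  moreover have "{out i, inn (Suc i mod Suc m)} \<in> insert {a, b} B" if "i \<le> m" for i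
    using that f[of i] unfolding inn_def out_def by (cases "i = m") (auto simp: insert_commute)
  moreover have "i = j" if "i \<le> m" "j \<le> m" "inc G (inn i) = inc G (inn j)" for i j
    using that inc_inn nth_eq_iff_index_eq[OF xs(1), of i j] xs(2) by simp
  moreover have "insert {a, b} B \<subseteq> edges G" using t(1) B by blast
  ultimately show ?thesis using circuit_walk_of_steps[of m G inn out "insert {a, b} B"] by blast
qed

lemma forest_mono: "forest G Y \<Longrightarrow> Z \<subseteq> Y \<Longrightarrow> forest G Z"
  unfolding forest_def by (meson order_trans)

lemma forest_empty: "forest G {}"
  unfolding forest_def circuit_walk_def using walk_edges_nth[of 0] by fastforce

lemma fundamental_circuit:
  assumes B: "forest G B" and t: "t \<in> edges G" and not_forest: "\<not> forest G (insert t B)"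
  obtains w where "circuit_walk G w" "t \<in> walk_edges w" "walk_edges w \<subseteq> insert t B"
proof -
  have "insert t B \<subseteq> edges G" using B t unfolding forest_def by simp
  then obtain w where w: "circuit_walk G w" "walk_edges w \<subseteq> insert t B"
    using not_forest unfolding forest_def by auto
  moreover have "t \<in> walk_edges w"
    using w B unfolding forest_def by (auto simp: subset_insert)
  ultimately show thesis using that by simp
qed

lemma cm_basis_fundamental_circuit:
  assumes B: "cm_basis G B" and t: "t \<in> edges G" "t \<notin> B"
  obtains w where "circuit_walk G w" "t \<in> walk_edges w" "walk_edges w \<subseteq> insert t B"
proof -
  have "\<not> forest G (insert t B)" using B t(2) unfolding cm_basis_def by blast
  with B t(1) show thesis using fundamental_circuit that unfolding cm_basis_def by blast
qed

lemma maximal_forest_exists: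
  assumes G: "is_graph G" and Y: "Y \<subseteq> edges G"
  obtains B where "B \<subseteq> Y" "forest G B" "\<And>t. t \<in> Y \<Longrightarrow> t \<notin> B \<Longrightarrow> \<not> forest G (insert t B)"
proof -
  define Fam where "Fam = {B. B \<subseteq> Y \<and> forest G B}"
  have "finite Fam"
    using finite_subset[OF Y is_graph_finite_edges[OF G]] unfolding Fam_def by simp
  moreover have "{} \<in> Fam" unfolding Fam_def using forest_empty by simp
  ultimately obtain B where B: "B \<in> Fam" and max: "\<And>B'. B' \<in> Fam \<Longrightarrow> B \<subseteq> B' \<Longrightarrow> B = B'"
    using finite_has_maximal[of Fam] by blast
  show thesis
  proof (rule that)
    show "B \<subseteq> Y" "forest G B" using B unfolding Fam_def by simp_all
    show "\<not> forest G (insert t B)" if "t \<in> Y" "t \<notin> B" for t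
      using max[of "insert t B"] that \<open>B \<subseteq> Y\<close> unfolding Fam_def by blast
  qed
qed

lemma cm_basis_maximal_forest:
  assumes G: "is_graph G" and Y: "Y \<subseteq> edges G" and B: "B \<subseteq> Y" "forest G B"
    and max: "\<And>t. t \<in> Y \<Longrightarrow> t \<notin> B \<Longrightarrow> \<not> forest G (insert t B)"
    and joined: "\<And>a b. {a, b} \<in> edges G \<Longrightarrow> {a, b} \<notin> Y \<Longrightarrow> (inc G a, inc G b) \<in> (joined_by G Y)\<^sup>*"
  shows "cm_basis G B"
proof -
  have "joined_by G Y \<subseteq> (joined_by G B)\<^sup>*"
  proof
    fix p assume "p \<in> joined_by G Y"
    then obtain a b where p: "p = (inc G a, inc G b)" "{a, b} \<in> Y" unfolding joined_by_def by auto
    show "p \<in> (joined_by G B)\<^sup>*"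
    proof (cases "{a, b} \<in> B")
      case True
      then show ?thesis unfolding p by (simp add: joined_byI r_into_rtrancl)
    next
      case False
      obtain w where w: "circuit_walk G w" "{a, b} \<in> walk_edges w" "walk_edges w \<subseteq> insert {a, b} B"
        using fundamental_circuit[OF B(2) _ max[OF p(2) False]] p(2) Y by blast
      show ?thesis unfolding p by (rule circuit_walk_joins_ends[OF w(1,3,2)])
    qed
  qed
  then have star: "(joined_by G Y)\<^sup>* \<subseteq> (joined_by G B)\<^sup>*"
    by (metis rtrancl_subset_rtrancl)
  have not_forest: "\<not> forest G (insert t B)" if t: "t \<in> edges G" "t \<notin> B" for t
  proof (cases "t \<in> Y")
    case False
    obtain a b where ab: "t = {a, b}" using is_graph_edgeE[OF G t(1)] by metis
    then have "(inc G a, inc G b) \<in> (joined_by G B)\<^sup>*" using joined[of a b] t False star by blast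
    then obtain w where "circuit_walk G w" "walk_edges w \<subseteq> insert t B"
      using circuit_walk_from_path[OF G _ _ _ subset_trans[OF B(1) Y]] t ab by blast
    then show ?thesis unfolding forest_def by blast
  qed (use max t in blast)
  show ?thesis unfolding cm_basis_def
  proof (intro conjI allI impI)
    fix Y' assume Y': "forest G Y' \<and> B \<subseteq> Y'"
    show "Y' = B"
    proof (rule ccontr)
      assume "Y' \<noteq> B"
      then obtain t where t: "t \<in> Y'" "t \<notin> B" using Y' by blast
      then have "t \<in> edges G" "forest G (insert t B)"
        using Y' forest_mono[of G Y' "insert t B"] unfolding forest_def by auto
      with not_forest t(2) show False by blast
    qed
  qed (rule B(2))
qed

section \<open>The touch-graph of a circuit partition\<close>

locale four_regular_circuit_partition =
  fixes F :: "('v,'h) hgraph" and P :: "'h set set set"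
  assumes graph: "is_graph F" and four_regular: "four_regular F"
    and partition: "circuit_partition F P"
begin

lemma circuit_walk_of_part:
  assumes "C \<in> P"
  obtains c where "circuit_walk F c" "trans_set c = C"
proof -
  have "circuit F C" using partition assms by (simp add: circuit_partition_def)
  then show thesis using that unfolding circuit_def by blast
qed

lemma part_memberE:
  assumes "s \<in> C" "C \<in> P"
  obtains a b where "s = {a, b}" "a \<noteq> b" "a \<in> halfs F" "b \<in> halfs F" "inc F a = inc F b"
proof -
  obtain c where c: "circuit_walk F c" "trans_set c = C" by (rule circuit_walk_of_part[OF assms(2)])
  then obtain m where m: "m < length c" "s = {fst (c ! m), snd (c ! m)}"
    using assms(1) trans_set_iff[of s c] by auto
  have "closed_walk F c" using c unfolding circuit_walk_def by simp
  from closed_walk_step[OF this m(1)] show thesis by (intro that[OF m(2)])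
qed

lemma part_member_single_trans: "s \<in> C \<Longrightarrow> C \<in> P \<Longrightarrow> single_trans F s"
  by (erule part_memberE) (auto simp: single_trans_def dir_single_trans_def)

lemma part_member_subset_halfs_at: "s \<in> C \<Longrightarrow> C \<in> P \<Longrightarrow> h \<in> s \<Longrightarrow> s \<subseteq> halfs_at F (inc F h)"
  by (erule part_memberE) (auto simp: halfs_at_def)

lemma part_member_subset_halfs: "s \<in> C \<Longrightarrow> C \<in> P \<Longrightarrow> s \<subseteq> halfs F"
  by (erule part_memberE) auto

lemma part_member_nonempty: "s \<in> C \<Longrightarrow> C \<in> P \<Longrightarrow> s \<noteq> {}"
  by (erule part_memberE) auto

lemma part_member_card: "s \<in> C \<Longrightarrow> C \<in> P \<Longrightarrow> card s = 2"
  by (erule part_memberE) auto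

lemma part_member_finite:
  assumes "s \<in> \<Union>P"
  shows "finite s"
proof -
  obtain C where "C \<in> P" "s \<in> C" using assms by blast
  then have "card s = 2" using part_member_card by blast
  then show ?thesis by (intro card_ge_0_finite) simp
qed

lemma part_unique:
  assumes "s \<in> C" "C \<in> P" "s' \<in> C'" "C' \<in> P" "h \<in> s" "h \<in> s'"
  shows "s = s'" "C = C'"
proof -
  have "h \<in> halfs F" using part_member_subset_halfs[OF assms(1,2)] assms(5) by blast
  then have "\<exists>!p. fst p \<in> P \<and> snd p \<in> fst p \<and> h \<in> snd p"
    using partition by (simp add: circuit_partition_def)
  moreover have "fst (C, s) \<in> P \<and> snd (C, s) \<in> fst (C, s) \<and> h \<in> snd (C, s)"
    "fst (C', s') \<in> P \<and> snd (C', s') \<in> fst (C', s') \<and> h \<in> snd (C', s')"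
    using assms by simp_all
  ultimately have "(C, s) = (C', s')" unfolding Ex1_def by blast
  then show "s = s'" "C = C'" by simp_all
qed

lemma half_covered:
  assumes "h \<in> halfs F"
  obtains C s where "C \<in> P" "s \<in> C" "h \<in> s"
proof -
  have "\<exists>!p. fst p \<in> P \<and> snd p \<in> fst p \<and> h \<in> snd p"
    using partition assms by (simp add: circuit_partition_def)
  then obtain p where "fst p \<in> P \<and> snd p \<in> fst p \<and> h \<in> snd p" by blast
  then show thesis using that by blast
qed

lemma finite_Union_parts: "finite (\<Union>P)"
proof -
  have "\<Union>P \<subseteq> Pow (halfs F)" using part_member_subset_halfs by blast
  then show ?thesis using is_graph_finite_halfs[OF graph] by (simp add: finite_subset)
qed

lemma inc_touch_graph:
  assumes "s \<in> C" "C \<in> P"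
  shows "inc (touch_graph F P) s = C"
proof -
  obtain h where h: "h \<in> s" using part_member_nonempty[OF assms] by blast
  have "(THE C. C \<in> P \<and> s \<in> C) = C"
  proof (rule the_equality)
    fix C' assume "C' \<in> P \<and> s \<in> C'"
    then show "C' = C" using part_unique(2)[OF _ _ assms h h] by blast
  qed (use assms in simp)
  then show ?thesis by (simp add: touch_graph_def)
qed

lemma touch_graph_simps [simp]:
  "verts (touch_graph F P) = P" "halfs (touch_graph F P) = \<Union>P" "edges (touch_graph F P) = tau F P"
  by (simp_all add: touch_graph_def)

lemma tauE:
  assumes "t \<in> tau F P"
  obtains s s' v where "t = {s, s'}" "s \<in> \<Union>P" "s' \<in> \<Union>P" "s \<noteq> s'" "s \<inter> s' = {}"
    "s \<union> s' = halfs_at F v" "v \<in> verts F"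
proof -
  have t: "t \<in> transitions F" "t \<subseteq> \<Union>P" using assms unfolding tau_def by auto
  have "\<exists>s s' v. t = {s, s'} \<and> v \<in> verts F \<and> single_trans F s \<and> single_trans F s' \<and>
      s \<inter> s' = {} \<and> s \<union> s' = {h\<in>halfs F. inc F h = v}"
    using t(1) unfolding transitions_def by (simp only: mem_Collect_eq)
  then obtain s s' v where d: "t = {s, s'}" "v \<in> verts F" "single_trans F s"
      "s \<inter> s' = {}" "s \<union> s' = halfs_at F v"
    unfolding halfs_at_def by blast
  have "s \<noteq> {}" using d(3) unfolding single_trans_def by auto
  then have "s \<noteq> s'" using d(4) by auto
  moreover have "s \<in> \<Union>P" "s' \<in> \<Union>P" using t(2) d(1) by auto
  ultimately show thesis using that d by blast
qed

lemma tau_memberE: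
  assumes "t \<in> tau F P" "s \<in> t"
  obtains s' v where "t = {s, s'}" "s' \<in> \<Union>P" "s \<noteq> s'" "s \<inter> s' = {}" "s \<union> s' = halfs_at F v"
    "v \<in> verts F"
proof -
  obtain s1 s2 v where d: "t = {s1, s2}" "s1 \<in> \<Union>P" "s2 \<in> \<Union>P" "s1 \<noteq> s2" "s1 \<inter> s2 = {}"
      "s1 \<union> s2 = halfs_at F v" "v \<in> verts F"
    by (rule tauE[OF assms(1)])
  have "s = s1 \<or> s = s2" using assms(2) d(1) by auto
  then show thesis
  proof
    assume "s = s1"
    then show thesis using that[of s2 v] d by simp
  next
    assume "s = s2"
    then show thesis using that[of s1 v] d by (auto simp: insert_commute)
  qed
qed

lemma tau_disjoint:
  assumes "t \<in> tau F P" "t' \<in> tau F P" "s \<in> t" "s \<in> t'"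
  shows "t = t'"
proof -
  obtain s1 v where d: "t = {s, s1}" "s \<inter> s1 = {}" "s \<union> s1 = halfs_at F v"
    by (rule tau_memberE[OF assms(1,3)])
  obtain s2 v' where d': "t' = {s, s2}" "s \<inter> s2 = {}" "s \<union> s2 = halfs_at F v'"
    by (rule tau_memberE[OF assms(2,4)])
  have "s \<in> \<Union>P" using assms(1,3) unfolding tau_def by blast
  then obtain h where "h \<in> s" using part_member_nonempty by blast
  then have "h \<in> halfs_at F v" "h \<in> halfs_at F v'" using d(3) d'(3) by blast+
  then have "v = v'" unfolding halfs_at_def by simp
  then have "s1 = s2" using d(2,3) d'(2,3) by blast
  then show ?thesis using d(1) d'(1) by simp
qed

lemma tau_covers:
  assumes "s \<in> C" "C \<in> P"
  shows "\<exists>t\<in>tau F P. s \<in> t"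
proof -
  obtain a b where ab: "s = {a, b}" "a \<noteq> b" "a \<in> halfs F" "inc F a = inc F b"
    by (rule part_memberE[OF assms])
  define v where "v = inc F a"
  have v: "v \<in> verts F" using is_graph_inc[OF graph ab(3)] v_def by simp
  have fin: "finite (halfs_at F v)" using is_graph_finite_halfs[OF graph] by (simp add: halfs_at_def)
  have sH: "s \<subseteq> halfs_at F v" using part_member_subset_halfs_at[OF assms] ab(1) v_def by simp
  have "card (halfs_at F v) = 4" using four_regular v unfolding four_regular_def halfs_at_def by blast
  then have c2: "card (halfs_at F v - s) = 2" using ab(1,2) sH fin by (simp add: card_Diff_subset)
  then obtain c where c: "c \<in> halfs_at F v - s" by (metis card.empty ex_in_conv zero_neq_numeral)
  then have "c \<in> halfs F" unfolding halfs_at_def by blast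
  then obtain C' s' where C': "C' \<in> P" "s' \<in> C'" "c \<in> s'" by (rule half_covered)
  have "s' \<subseteq> halfs_at F v"
    using part_member_subset_halfs_at[OF C'(2,1,3)] c unfolding halfs_at_def by simp
  moreover have dj: "s \<inter> s' = {}"
  proof (rule ccontr)
    assume "s \<inter> s' \<noteq> {}"
    then obtain x where "x \<in> s" "x \<in> s'" by blast
    then have "s' = s" using part_unique(1)[OF C'(2,1) assms] by blast
    then show False using c C'(3) by blast
  qed
  ultimately have "s' \<subseteq> halfs_at F v - s" by blast
  then have s'eq: "s' = halfs_at F v - s"
    using c2 fin part_member_card[OF C'(2,1)] by (metis card_subset_eq finite_Diff)
  have "s \<union> s' = {h\<in>halfs F. inc F h = v}" using sH s'eq unfolding halfs_at_def by blast
  then have "{s, s'} \<in> transitions F"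
    unfolding transitions_def using v part_member_single_trans[OF assms]
      part_member_single_trans[OF C'(2,1)] dj by blast
  moreover have "{s, s'} \<subseteq> \<Union>P" using assms C' by blast
  ultimately show ?thesis unfolding tau_def by blast
qed

lemma is_graph_touch_graph: "is_graph (touch_graph F P)"
proof -
  have "finite P" by (rule finite_UnionD[OF finite_Union_parts])
  moreover have "\<exists>a b. a \<noteq> b \<and> t = {a, b}" if t: "t \<in> tau F P" for t
  proof -
    obtain s s' v where "t = {s, s'}" "s \<noteq> s'" by (rule tauE[OF t])
    then show ?thesis by blast
  qed
  moreover have "\<Union>(tau F P) = \<Union>P"
  proof
    show "\<Union>(tau F P) \<subseteq> \<Union>P" unfolding tau_def by blast
    show "\<Union>P \<subseteq> \<Union>(tau F P)"
    proof
      fix s assume "s \<in> \<Union>P"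
      then obtain C where "s \<in> C" "C \<in> P" by blast
      from tau_covers[OF this] show "s \<in> \<Union>(tau F P)" by blast
    qed
  qed
  moreover have "t \<inter> t' = {}" if "t \<in> tau F P" "t' \<in> tau F P" "t \<noteq> t'" for t t'
    using tau_disjoint[OF that(1,2)] that(3) by blast
  moreover have "inc (touch_graph F P) ` \<Union>P \<subseteq> P"
  proof (rule image_subsetI)
    fix s assume "s \<in> \<Union>P"
    then obtain C where "s \<in> C" "C \<in> P" by blast
    then show "inc (touch_graph F P) s \<in> P" using inc_touch_graph by simp
  qed
  ultimately show ?thesis unfolding is_graph_def using finite_Union_parts by simp
qed

lemma vertex_splitE:
  assumes v: "v \<in> verts F"
  obtains s s' where "{s, s'} \<in> tau F P" "s \<noteq> s'" "s \<inter> s' = {}" "s \<union> s' = halfs_at F v"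
proof -
  have "card (halfs_at F v) = 4" using four_regular v unfolding four_regular_def halfs_at_def by blast
  then obtain h where h: "h \<in> halfs_at F v" by (metis card.empty ex_in_conv zero_neq_numeral)
  then have "h \<in> halfs F" unfolding halfs_at_def by blast
  then obtain C s where C: "C \<in> P" "s \<in> C" "h \<in> s" by (rule half_covered)
  then obtain t where t: "t \<in> tau F P" "s \<in> t" using tau_covers by blast
  obtain s' v' where d: "t = {s, s'}" "s' \<in> \<Union>P" "s \<noteq> s'" "s \<inter> s' = {}"
      "s \<union> s' = halfs_at F v'" "v' \<in> verts F"
    by (rule tau_memberE[OF t])
  have "h \<in> halfs_at F v'" using d(5) C(3) by blast
  then have "v' = v" using h unfolding halfs_at_def by simp
  then show thesis using that d t(1) by simp
qed

lemma part_halfs_edge_closed: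
  assumes C: "C \<in> P" and h: "h \<in> \<Union>C" and e: "e \<in> edges F" "h \<in> e"
  shows "e \<subseteq> \<Union>C"
proof -
  obtain c where c: "circuit_walk F c" "trans_set c = C" by (rule circuit_walk_of_part[OF C])
  have W: "closed_walk F c" using c unfolding circuit_walk_def by simp
  let ?n = "length c"
  have inC: "{fst (c ! k), snd (c ! k)} \<in> C" if "k < ?n" for k
    using trans_set_iff[of _ c] that unfolding c(2) by blast
  obtain s where s: "s \<in> C" "h \<in> s" using h by blast
  then obtain m where m: "m < ?n" "s = {fst (c ! m), snd (c ! m)}"
    using trans_set_iff[of s c] unfolding c(2) by blast
  from s(2) m(2) have hm: "h = fst (c ! m) \<or> h = snd (c ! m)" by blast
  have edge_eq: "{snd (c ! j), fst (c ! (Suc j mod ?n))} = e" if j: "j < ?n"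
    and "h \<in> {snd (c ! j), fst (c ! (Suc j mod ?n))}" for j
    using is_graph_edges_disjoint[OF graph closed_walk_edge[OF W j] e(1) that(2) e(2)] .
  from hm show ?thesis
  proof
    assume "h = snd (c ! m)"
    then have "{snd (c ! m), fst (c ! (Suc m mod ?n))} = e" using edge_eq[OF m(1)] by simp
    then show ?thesis using inC[OF m(1)] inC[of "Suc m mod ?n"] Suc_mod_less[OF m(1)] by blast
  next
    assume hm: "h = fst (c ! m)"
    obtain j where j: "j < ?n" "Suc j mod ?n = m" using ex_Suc_mod_eq[OF m(1)] by blast
    then have "{snd (c ! j), fst (c ! (Suc j mod ?n))} = e" using edge_eq[OF j(1)] hm by simp
    then show ?thesis using inC[OF m(1)] inC[OF j(1)] j(2) by blast
  qed
qed

lemma antisymmetric_lift_iff_conserved: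
  "antisymmetric (touch_graph F P) (sum g) \<longleftrightarrow> conserved F g"
proof -
  have split: "sum (sum g) {s, s'} = sum g (halfs_at F v)"
    if "{s, s'} \<in> tau F P" "s \<noteq> s'" "s \<inter> s' = {}" "s \<union> s' = halfs_at F v" for s s' v
  proof -
    have "s \<in> \<Union>P" "s' \<in> \<Union>P" using that(1) unfolding tau_def by blast+
    then have "finite s" "finite s'" using part_member_finite by blast+
    then show ?thesis using that(2-4) sum.union_disjoint[of s s' g] by simp
  qed
  show ?thesis
  proof
    assume anti: "antisymmetric (touch_graph F P) (sum g)"
    show "conserved F g" unfolding conserved_def
    proof
      fix v assume "v \<in> verts F"
      then obtain s s' where t: "{s, s'} \<in> tau F P" "s \<noteq> s'" "s \<inter> s' = {}" "s \<union> s' = halfs_at F v"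
        by (rule vertex_splitE)
      have "sum (sum g) {s, s'} = 0" using anti t(1) unfolding antisymmetric_def by simp
      then show "sum g (halfs_at F v) = 0" using split[OF t] by simp
    qed
  next
    assume cons: "conserved F g"
    show "antisymmetric (touch_graph F P) (sum g)" unfolding antisymmetric_def touch_graph_simps
    proof
      fix t assume t: "t \<in> tau F P"
      then obtain s s' v where d: "t = {s, s'}" "s \<in> \<Union>P" "s' \<in> \<Union>P" "s \<noteq> s'" "s \<inter> s' = {}"
          "s \<union> s' = halfs_at F v" "v \<in> verts F"
        by (rule tauE)
      have "sum g (halfs_at F v) = 0" using cons d(7) unfolding conserved_def by blast
      then show "sum (sum g) t = 0" using split[of s s' v] t d by simp
    qed
  qed
qed

lemma halfs_at_touch_graph: "C \<in> P \<Longrightarrow> halfs_at (touch_graph F P) C = C"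
  unfolding halfs_at_def touch_graph_simps by (blast dest: inc_touch_graph)

lemma conserved_lift:
  assumes g: "antisymmetric F g"
  shows "conserved (touch_graph F P) (sum g)"
  unfolding conserved_def touch_graph_simps
proof
  fix C assume C: "C \<in> P"
  have fin: "\<forall>s\<in>C. finite s" using C part_member_finite by blast
  have disj: "\<forall>s\<in>C. \<forall>s'\<in>C. s \<noteq> s' \<longrightarrow> s \<inter> s' = {}"
    using part_unique(1)[OF _ C _ C] by blast
  have "sum (sum g) C = sum g (\<Union>C)" using sum.Union_disjoint[OF fin disj, of g] by (simp add: o_def)
  also have "\<dots> = 0"
  proof (rule antisymmetric_sum_edge_closed[OF graph g])
    show "\<Union>C \<subseteq> halfs F" using part_member_subset_halfs[OF _ C] by blast
    show "e \<subseteq> \<Union>C" if "e \<in> edges F" "h \<in> e" "h \<in> \<Union>C" for e h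
      using part_halfs_edge_closed[OF C that(3,1,2)] .
  qed
  finally show "sum (sum g) (halfs_at (touch_graph F P) C) = 0" using halfs_at_touch_graph[OF C] by simp
qed

lemma orientation_in_tau:
  assumes "transitional_orientation F ori" "t \<in> tau F P"
  shows "ori t \<in> t" "ori t \<in> \<Union>P"
  using assms unfolding transitional_orientation_def tau_def by blast+

lemma Delta_sum_tau:
  assumes D: "directed_version F tail" and O: "transitional_orientation F ori"
    and g: "antisymmetric F g" and t: "t \<in> tau F P"
  shows "(\<Sum>e\<in>edges F. g (tail e) * Delta tail ori e t) = sum g (ori t)"
proof -
  obtain C where "ori t \<in> C" "C \<in> P" using orientation_in_tau(2)[OF O t] by blast
  then have "halfs F \<inter> ori t = ori t" using part_member_subset_halfs by blast
  then show ?thesis using Delta_sum_antisymmetric[OF graph D g] by simp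
qed

lemma matrix_entry_walk_flow:
  assumes D: "directed_version F tail" and O: "transitional_orientation F ori"
    and W: "closed_walk F W" and t: "t \<in> tau F P"
  shows "(\<Sum>e\<in>edges F. CM tail W e * Delta tail ori e t) = sum (walk_flow W) (ori t)"
  using Delta_sum_tau[OF D O walk_flow_antisymmetric[OF graph W] t] CM_eq_walk_flow[OF graph D W]
  by simp

lemma ends_joined_if_col_indep:
  assumes D: "directed_version F tail" and O: "transitional_orientation F ori"
    and \<Gamma>: "\<And>W. W \<in> \<Gamma> \<Longrightarrow> closed_walk F W"
    and X: "col_indep \<Gamma> (edges (touch_graph F P)) (\<lambda>W t. \<Sum>e\<in>edges F. CM tail W e * Delta tail ori e t) X"
    and t: "{s1, s2} \<in> X"
  shows "(inc (touch_graph F P) s1, inc (touch_graph F P) s2) \<in> (joined_by (touch_graph F P) (tau F P - X))\<^sup>*"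
proof (rule ccontr)
  let ?T = "touch_graph F P" and ?R = "joined_by (touch_graph F P) (tau F P - X)"
  assume not_joined: "(inc ?T s1, inc ?T s2) \<notin> ?R\<^sup>*"
  define S where "S = {C. (inc ?T s1, C) \<in> ?R\<^sup>*}"
  define a where "a t' = crossing_sign ?T S t' (ori t')" for t'
  have XT: "X \<subseteq> tau F P" using X unfolding col_indep_def by simp
  have S_sub: "S \<subseteq> P"
  proof
    fix C assume "C \<in> S"
    then have "(inc ?T s1, C) \<in> ?R\<^sup>*" unfolding S_def by simp
    then show "C \<in> P"
    proof (cases rule: rtranclE)
      case base
      have "s1 \<in> \<Union>P" using t XT unfolding tau_def by blast
      then show ?thesis using base inc_touch_graph by auto
    next
      case (step C')
      then obtain x y where "{x, y} \<in> tau F P" "C = inc ?T y" unfolding joined_by_def by auto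
      then show ?thesis using is_graph_inc[OF is_graph_touch_graph, of y] unfolding tau_def by auto
    qed
  qed
  have a_outside: "a t' = 0" if t': "t' \<in> tau F P" "t' \<notin> X" for t'
  proof (rule ccontr)
    assume "a t' \<noteq> 0"
    then obtain x y where "x \<in> t'" "y \<in> t'" "inc ?T x \<in> S" "inc ?T y \<notin> S"
      unfolding a_def crossing_sign_def by (auto split: if_splits)
    moreover obtain u v where "t' = {u, v}" using tauE[OF t'(1)] by metis
    ultimately have "t' = {x, y}" by auto
    then have "(inc ?T x, inc ?T y) \<in> ?R" using t' by (simp add: joined_byI)
    then show False using \<open>inc ?T x \<in> S\<close> \<open>inc ?T y \<notin> S\<close> unfolding S_def by (simp add: rtrancl_into_rtrancl)
  qed
  have "(\<Sum>t'\<in>X. a t' * (\<Sum>e\<in>edges F. CM tail W e * Delta tail ori e t')) = 0" if W: "W \<in> \<Gamma>" for W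
  proof -
    have anti: "antisymmetric ?T (sum (walk_flow W))"
      unfolding antisymmetric_lift_iff_conserved by (rule walk_flow_conserved[OF graph \<Gamma>[OF W]])
    have cons: "conserved ?T (sum (walk_flow W))"
      by (rule conserved_lift[OF walk_flow_antisymmetric[OF graph \<Gamma>[OF W]]])
    have "(\<Sum>t'\<in>X. a t' * (\<Sum>e\<in>edges F. CM tail W e * Delta tail ori e t'))
        = (\<Sum>t'\<in>X. a t' * sum (walk_flow W) (ori t'))"
      using matrix_entry_walk_flow[OF D O \<Gamma>[OF W]] XT by (intro sum.cong) auto
    also have "\<dots> = (\<Sum>t'\<in>tau F P. a t' * sum (walk_flow W) (ori t'))"
      using XT a_outside finite_subset[OF _ is_graph_finite_edges[OF is_graph_touch_graph]]
      by (intro sum.mono_neutral_left) auto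
    also have "\<dots> = 0"
      using circulation_across_cut[OF is_graph_touch_graph anti cons, of S ori] S_sub orientation_in_tau(1)[OF O]
      unfolding a_def by simp
    finally show ?thesis .
  qed
  then have "a {s1, s2} = 0" using X t unfolding col_indep_def by blast
  moreover have "inc ?T s1 \<in> S" "inc ?T s2 \<notin> S" using not_joined unfolding S_def by auto
  ultimately show False unfolding a_def crossing_sign_def by (auto split: if_splits)
qed

lemma cocycle_indep_if_col_indep:
  assumes D: "directed_version F tail" and O: "transitional_orientation F ori"
    and \<Gamma>: "\<And>W. W \<in> \<Gamma> \<Longrightarrow> closed_walk F W"
    and X: "col_indep \<Gamma> (edges (touch_graph F P)) (\<lambda>W t. \<Sum>e\<in>edges F. CM tail W e * Delta tail ori e t) X"
  shows "cocycle_indep (touch_graph F P) X"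
proof -
  let ?T = "touch_graph F P"
  have XT: "X \<subseteq> edges ?T" using X unfolding col_indep_def by simp
  obtain B where B: "B \<subseteq> edges ?T - X" "forest ?T B"
    "\<And>t. t \<in> edges ?T - X \<Longrightarrow> t \<notin> B \<Longrightarrow> \<not> forest ?T (insert t B)"
    by (rule maximal_forest_exists[OF is_graph_touch_graph, of "edges ?T - X"]) auto
  have "cm_basis ?T B"
  proof (rule cm_basis_maximal_forest[OF is_graph_touch_graph _ B])
    fix a b assume "{a, b} \<in> edges ?T" "{a, b} \<notin> edges ?T - X"
    then have "{a, b} \<in> X" by blast
    from ends_joined_if_col_indep[OF D O \<Gamma> X this]
    show "(inc ?T a, inc ?T b) \<in> (joined_by ?T (edges ?T - X))\<^sup>*" by simp
  qed auto
  then show ?thesis using XT B(1) unfolding cocycle_indep_def by blast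
qed

end

section \<open>Lifting circuits of the touch-graph\<close>

locale circuit_partition_with_edge_set = four_regular_circuit_partition +
  fixes E :: "'h set set"
  assumes edge_set: "E \<subseteq> edges F"
    and one_edge_per_circuit:
      "\<forall>C\<in>P. \<forall>w. circuit_walk F w \<and> trans_set w = C \<longrightarrow> card (walk_edges w \<inter> E) \<le> 1"
begin

lemma arc_avoiding_edge_set:
  assumes c: "circuit_walk F c" "trans_set c = C" "C \<in> P" and q: "q < length c"
  shows "(\<forall>j<q. {snd (c ! j), fst (c ! (Suc j mod length c))} \<notin> E)
    \<or> (\<forall>j\<in>{q..<length c}. {snd (c ! j), fst (c ! (Suc j mod length c))} \<notin> E)"
proof (rule ccontr)
  let ?edge = "\<lambda>j. {snd (c ! j), fst (c ! (Suc j mod length c))}"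
  assume "\<not> ?thesis"
  then obtain j1 j2 where j: "j1 < q" "?edge j1 \<in> E" "q \<le> j2" "j2 < length c" "?edge j2 \<in> E"
    by auto
  have d: "distinct (walk_halfs c)" using c(1) unfolding circuit_walk_def by simp
  have "j1 \<noteq> j2" "j1 < length c" using j q by simp_all
  then have "?edge j1 \<noteq> ?edge j2" using walk_edges_inj[OF d _ j(4)] by blast
  then have "card {?edge j1, ?edge j2} = 2" by simp
  moreover have "{?edge j1, ?edge j2} \<subseteq> walk_edges c \<inter> E"
    using j(2,5) walk_edges_nth[OF \<open>j1 < length c\<close>] walk_edges_nth[OF j(4)] by blast
  moreover have "finite (walk_edges c \<inter> E)"
    using finite_subset[OF edge_set is_graph_finite_edges[OF graph]] by blast
  ultimately have "2 \<le> card (walk_edges c \<inter> E)" by (metis card_mono)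
  moreover have "card (walk_edges c \<inter> E) \<le> 1" using one_edge_per_circuit c by blast
  ultimately show False by simp
qed

lemma arc_flow_outside_part:
  assumes c: "trans_set c = C" "C \<in> P" and J: "J \<subseteq> {..<length c}" and x: "x \<in> \<Union>P" "x \<notin> C"
  shows "sum (arc_flow c J) x = 0"
proof (rule sum.neutral, rule ballI)
  fix h assume h: "h \<in> x"
  obtain C' where C': "C' \<in> P" "x \<in> C'" using x(1) by blast
  have "h \<noteq> fst (c ! i) \<and> h \<noteq> snd (c ! i)" if i: "i < length c" for i
  proof -
    have "{fst (c ! i), snd (c ! i)} \<in> C" using trans_set_iff[of _ c] i c(1) by auto
    then show ?thesis using part_unique(1)[OF C'(2,1) _ c(2) h] x(2) by blast
  qed
  then show "arc_flow c J h = 0" by (rule arc_flow_off_walk[OF _ J])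
qed

lemma flow_between_transitions:
  assumes C: "C \<in> P" and s: "s \<in> C" "s' \<in> C" "s \<noteq> s'"
  obtains g :: "'h \<Rightarrow> rat" where "antisymmetric F g" "\<And>h. h \<in> \<Union>E \<Longrightarrow> g h = 0"
    "\<And>x. x \<in> \<Union>P \<Longrightarrow> sum g x = (if x = s then 1 else 0) - (if x = s' then 1 else 0)"
proof -
  define \<delta> where "\<delta> x = (if x = s then 1 else 0) - (if x = s' then 1 else (0::rat))" for x
  obtain c0 where c0: "circuit_walk F c0" "trans_set c0 = C" by (rule circuit_walk_of_part[OF C])
  then obtain c where c: "circuit_walk F c" "trans_set c = C" and s0: "s = {fst (c ! 0), snd (c ! 0)}"
    using circuit_walk_starting_at[OF c0(1), of s] s(1) by metis
  let ?n = "length c"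
  have W: "closed_walk F c" and d: "distinct (walk_halfs c)" using c(1) unfolding circuit_walk_def by auto
  obtain q where q: "q < ?n" "s' = {fst (c ! q), snd (c ! q)}" using s(2) c(2) trans_set_iff[of s' c] by auto
  have q0: "0 < q" using s(3) s0 q(2) by (cases q) auto
  have arcs: "{..<q} \<subseteq> {..<?n}" "{q..<?n} \<subseteq> {..<?n}" using q(1) by auto
  have flows: "sum (arc_flow c {..<q}) x = \<delta> x \<and> sum (arc_flow c {q..<?n}) x = - \<delta> x"
    if x: "x \<in> \<Union>P" for x
  proof (cases "x \<in> C")
    case True
    then obtain m where m: "m < ?n" "x = {fst (c ! m), snd (c ! m)}"
      using c(2) trans_set_iff[of x c] by auto
    have "0 < ?n" using m(1) by linarith
    then have "x = s \<longleftrightarrow> m = 0" "x = s' \<longleftrightarrow> m = q"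
      using transition_inj[OF d m(1)] transition_inj[OF d m(1) q(1)] unfolding m(2) s0 q(2) by simp_all
    then show ?thesis
      using sum_arc_flow_arcs[OF d q0 q(1) m(1)] unfolding \<delta>_def m(2)[symmetric] by simp
  next
    case False
    then have "x \<noteq> s" "x \<noteq> s'" using s by auto
    then show ?thesis
      using arc_flow_outside_part[OF c(2) C arcs(1) x False] arc_flow_outside_part[OF c(2) C arcs(2) x False]
      unfolding \<delta>_def by simp
  qed
  have vanish: "arc_flow c J h = 0"
    if J: "J \<subseteq> {..<?n}" "\<forall>j\<in>J. {snd (c ! j), fst (c ! (Suc j mod ?n))} \<notin> E" and h: "h \<in> \<Union>E"
    for J h
  proof -
    obtain e where e: "e \<in> E" "h \<in> e" using h by blast
    then show ?thesis using arc_flow_untraversed[OF graph W J(1) _ _ e(2)] J(2) edge_set by blast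
  qed
  from arc_avoiding_edge_set[OF c(1,2) C q(1)] show thesis
  proof
    assume avoid: "\<forall>j<q. {snd (c ! j), fst (c ! (Suc j mod ?n))} \<notin> E"
    have "antisymmetric F (arc_flow c {..<q})" by (rule arc_flow_antisymmetric[OF graph W arcs(1)])
    moreover have "arc_flow c {..<q} h = 0" if "h \<in> \<Union>E" for h
      using vanish[OF arcs(1) _ that] avoid by simp
    moreover have "sum (arc_flow c {..<q}) x = (if x = s then 1 else 0) - (if x = s' then 1 else 0)"
      if "x \<in> \<Union>P" for x
      using flows[OF that] unfolding \<delta>_def by simp
    ultimately show thesis by (rule that)
  next
    assume avoid: "\<forall>j\<in>{q..<?n}. {snd (c ! j), fst (c ! (Suc j mod ?n))} \<notin> E"
    have "antisymmetric F (\<lambda>h. - arc_flow c {q..<?n} h)"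
      using arc_flow_antisymmetric[OF graph W arcs(2)] by (simp add: antisymmetric_uminus)
    moreover have "- arc_flow c {q..<?n} h = 0" if "h \<in> \<Union>E" for h
      using vanish[OF arcs(2) avoid that] by simp
    moreover have "(\<Sum>h\<in>x. - arc_flow c {q..<?n} h) = (if x = s then 1 else 0) - (if x = s' then 1 else 0)"
      if "x \<in> \<Union>P" for x
      using flows[OF that] unfolding \<delta>_def by (simp add: sum_negf)
    ultimately show thesis by (rule that)
  qed
qed

lemma circuit_lift:
  assumes w: "circuit_walk (touch_graph F P) w"
  obtains g :: "'h \<Rightarrow> rat" where "antisymmetric F g" "conserved F g" "\<And>h. h \<in> \<Union>E \<Longrightarrow> g h = 0"
    "\<And>x. x \<in> \<Union>P \<Longrightarrow> sum g x = - walk_flow w x"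
proof -
  let ?T = "touch_graph F P"
  have W: "closed_walk ?T w" using w unfolding circuit_walk_def by simp
  have "\<forall>i. \<exists>g::'h \<Rightarrow> rat. i < length w \<longrightarrow> antisymmetric F g \<and> (\<forall>h\<in>\<Union>E. g h = 0) \<and>
    (\<forall>x\<in>\<Union>P. sum g x = (if x = fst (w ! i) then 1 else 0) - (if x = snd (w ! i) then 1 else 0))"
  proof
    fix i
    show "\<exists>g::'h \<Rightarrow> rat. i < length w \<longrightarrow> antisymmetric F g \<and> (\<forall>h\<in>\<Union>E. g h = 0) \<and>
      (\<forall>x\<in>\<Union>P. sum g x = (if x = fst (w ! i) then 1 else 0) - (if x = snd (w ! i) then 1 else 0))"
    proof (cases "i < length w")
      case True
      note step = closed_walk_step[OF W True]
      obtain C where C: "C \<in> P" "fst (w ! i) \<in> C" using step(1) by auto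
      obtain C' where C': "C' \<in> P" "snd (w ! i) \<in> C'" using step(2) by auto
      have "C' = C" using step(4) inc_touch_graph[OF C(2,1)] inc_touch_graph[OF C'(2,1)] by simp
      then obtain g :: "'h \<Rightarrow> rat" where "antisymmetric F g" "\<And>h. h \<in> \<Union>E \<Longrightarrow> g h = 0"
        "\<And>x. x \<in> \<Union>P \<Longrightarrow> sum g x = (if x = fst (w ! i) then 1 else 0) - (if x = snd (w ! i) then 1 else 0)"
        using flow_between_transitions[OF C(1) C(2) _ step(3)] C' by blast
      then show ?thesis by blast
    qed simp
  qed
  then obtain gs :: "nat \<Rightarrow> 'h \<Rightarrow> rat" where gs: "\<And>i. i < length w \<Longrightarrow> antisymmetric F (gs i)"
    "\<And>i h. i < length w \<Longrightarrow> h \<in> \<Union>E \<Longrightarrow> gs i h = 0"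
    "\<And>i x. i < length w \<Longrightarrow> x \<in> \<Union>P \<Longrightarrow>
       sum (gs i) x = (if x = fst (w ! i) then 1 else 0) - (if x = snd (w ! i) then 1 else 0)"
    by (metis choice)
  define g where "g h = (\<Sum>i<length w. gs i h)" for h
  have anti: "antisymmetric F g" unfolding g_def by (rule antisymmetric_sum) (simp add: gs(1))
  have vanish: "g h = 0" if "h \<in> \<Union>E" for h unfolding g_def using gs(2) that by simp
  have sums: "sum g x = - walk_flow w x" if x: "x \<in> \<Union>P" for x
  proof -
    have "sum g x = (\<Sum>i<length w. sum (gs i) x)" unfolding g_def by (rule sum.swap)
    also have "\<dots> = (\<Sum>i<length w. (if x = fst (w ! i) then 1 else 0) - (if x = snd (w ! i) then 1 else 0))"
      using gs(3) x by simp
    also have "\<dots> = - walk_flow w x" unfolding walk_flow_def by (simp add: sum_negf[symmetric] eq_commute)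
    finally show ?thesis .
  qed
  have "antisymmetric ?T (\<lambda>s. - walk_flow w s)"
    using walk_flow_antisymmetric[OF is_graph_touch_graph W] by (simp add: antisymmetric_uminus)
  then have "antisymmetric ?T (sum g)"
    using antisymmetric_cong[OF is_graph_touch_graph, of "sum g" "\<lambda>s. - walk_flow w s"] sums by simp
  then have "conserved F g" by (simp add: antisymmetric_lift_iff_conserved)
  then show thesis using that anti vanish sums by blast
qed

lemma lift_in_cycle_space:
  assumes D: "directed_version F tail" and anti: "antisymmetric F g" and cons: "conserved F g"
    and vanish: "\<And>h. h \<in> \<Union>E \<Longrightarrow> g h = 0"
  shows "(\<lambda>e. if e \<in> edges (del_edges F E) then g (tail e) else 0) \<in> cycle_space (del_edges F E) tail"
proof (rule circulation_in_cycle_space)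
  show "is_graph (del_edges F E)" by (rule is_graph_del_edges[OF graph edge_set])
  show "directed_version (del_edges F E) tail" using D by (simp add: directed_version_def del_edges_def)
  show "antisymmetric (del_edges F E) g" by (rule antisymmetric_del_edges[OF anti])
  show "conserved (del_edges F E) g" by (rule conserved_del_edges[OF graph cons vanish])
qed

lemma col_indep_if_cocycle_indep:
  assumes D: "directed_version F tail" and O: "transitional_orientation F ori"
    and \<Gamma>: "cycle_spanning_set (del_edges F E) tail \<Gamma>"
    and X: "cocycle_indep (touch_graph F P) X"
  shows "col_indep \<Gamma> (edges (touch_graph F P)) (\<lambda>W t. \<Sum>e\<in>edges F. CM tail W e * Delta tail ori e t) X"
proof -
  let ?T = "touch_graph F P"
  have XT: "X \<subseteq> tau F P" using X unfolding cocycle_indep_def by simp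
  obtain B where B: "cm_basis ?T B" "X \<inter> B = {}" using X unfolding cocycle_indep_def by blast
  have finX: "finite X" using finite_subset[OF XT] is_graph_finite_edges[OF is_graph_touch_graph] by simp
  obtain Bs where Bs: "Bs \<subseteq> \<Gamma>" "lin_span (sigma_vec tail ` Bs) = cycle_space (del_edges F E) tail"
    using \<Gamma> unfolding cycle_spanning_set_def cycle_basis_def by blast
  show ?thesis unfolding col_indep_def touch_graph_simps
  proof (intro conjI allI impI ballI XT finX)
    fix a t0
    assume hyp: "\<forall>W\<in>\<Gamma>. (\<Sum>t\<in>X. a t * (\<Sum>e\<in>edges F. CM tail W e * Delta tail ori e t)) = 0"
      and t0: "t0 \<in> X"
    have "t0 \<in> edges ?T" "t0 \<notin> B" using t0 XT B(2) by auto
    then obtain w where w: "circuit_walk ?T w" "t0 \<in> walk_edges w" "walk_edges w \<subseteq> insert t0 B"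
      by (rule cm_basis_fundamental_circuit[OF B(1)])
    have W: "closed_walk ?T w" using w(1) unfolding circuit_walk_def by simp
    obtain g :: "'h \<Rightarrow> rat" where g: "antisymmetric F g" "conserved F g" "\<And>h. h \<in> \<Union>E \<Longrightarrow> g h = 0"
        "\<And>x. x \<in> \<Union>P \<Longrightarrow> sum g x = - walk_flow w x"
      using circuit_lift[OF w(1)] by blast
    define z where "z e = (if e \<in> edges (del_edges F E) then g (tail e) else 0)" for e
    have "z \<in> lin_span (sigma_vec tail ` Bs)"
      unfolding Bs(2) z_def by (rule lift_in_cycle_space[OF D g(1-3)])
    then have zero: "(\<Sum>t\<in>X. a t * (\<Sum>e\<in>edges F. z e * Delta tail ori e t)) = 0"
      by (rule lin_span_annihilated) (use hyp Bs(1) in \<open>auto simp: CM_def\<close>)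
    have entry: "(\<Sum>e\<in>edges F. z e * Delta tail ori e t) = - walk_flow w (ori t)" if t: "t \<in> tau F P" for t
    proof -
      have "z e = g (tail e)" if e: "e \<in> edges F" for e
        using e g(3)[of "tail e"] D unfolding z_def directed_version_def del_edges_def by auto
      then have "(\<Sum>e\<in>edges F. z e * Delta tail ori e t) = (\<Sum>e\<in>edges F. g (tail e) * Delta tail ori e t)"
        by simp
      also have "\<dots> = sum g (ori t)" by (rule Delta_sum_tau[OF D O g(1) t])
      finally show ?thesis using g(4) orientation_in_tau(2)[OF O t] by simp
    qed
    have off: "walk_flow w (ori t) = 0" if t: "t \<in> X - {t0}" for t
    proof -
      have "t \<in> edges ?T" "t \<notin> walk_edges w" using t XT B(2) w(3) by auto
      then show ?thesis
        using walk_flow_untraversed[OF is_graph_touch_graph W] orientation_in_tau(1)[OF O] by simp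
    qed
    have "0 = (\<Sum>t\<in>X. a t * - walk_flow w (ori t))" using zero entry XT by (simp add: subset_iff)
    also have "\<dots> = a t0 * - walk_flow w (ori t0)"
      using sum.remove[OF finX t0, of "\<lambda>t. a t * - walk_flow w (ori t)"] off by simp
    finally have "a t0 * walk_flow w (ori t0) = 0" by simp
    moreover have "walk_flow w (ori t0) \<noteq> 0"
      using walk_flow_traversed[OF w(1,2) orientation_in_tau(1)[OF O]] t0 XT by blast
    ultimately show "a t0 = 0" by simp
  qed
qed

end

theorem mainTheorem9:
  fixes F :: "('v,'h) hgraph"
    and tail :: "'h set \<Rightarrow> 'h"
    and ori :: "'h set set \<Rightarrow> 'h set"
    and P :: "'h set set set"
    and E :: "'h set set"
    and \<Gamma> :: "('h \<times> 'h) list set"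
  assumes "is_graph F"
    and "four_regular F"
    and "directed_version F tail"
    and "transitional_orientation F ori"
    and "circuit_partition F P"
    and "E \<subseteq> edges F"
    and "\<forall>C\<in>P. \<forall>w. circuit_walk F w \<and> trans_set w = C \<longrightarrow> card (walk_edges w \<inter> E) \<le> 1"
    and "cycle_spanning_set (del_edges F E) tail \<Gamma>"
  shows "represents_cographic \<Gamma>
           (\<lambda>W t. \<Sum>e\<in>edges F. CM tail W e * Delta tail ori e t)
           (touch_graph F P)"
proof -
  interpret circuit_partition_with_edge_set F P E
    by unfold_locales (use assms in auto)
  have "closed_walk F W" if "W \<in> \<Gamma>" for W
    using assms(8) that closed_walk_del_edges unfolding cycle_spanning_set_def by blast
  then show ?thesis unfolding represents_cographic_def
    using col_indep_if_cocycle_indep[OF assms(3,4,8)] cocycle_indep_if_col_indep[OF assms(3,4)] by blast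
qed

end
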